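(* Let $X_A, X_B, X_M$ be finite sets and let the notepads and the mailbox be purely classical: $\mathcal{A}=\mathcal{C}(X_A)$, $\mathcal{B}=\mathcal{C}(X_B)$, $\mathcal{M}=\mathcal{C}(X_M)$. Then for every $\epsilon<\tfrac12$ there is no pair of strategies $(\sigma_A,\sigma_B)\in\Sigma_A(\mathcal{A},\mathcal{M})\times\Sigma_B(\mathcal{B},\mathcal{M})$ which is a weak coin tossing protocol with bias $\epsilon$ (and consequently none which is a strong coin tossing protocol with bias $\epsilon$).
   Context: Observable algebras. For a finite set $X=\{1,\dots,n\}$, $\mathcal{C}(X)\subset\mathcal{B}(\mathbb{C}^n)$ denotes the algebra of operators diagonal in a fixed orthonormal basis $\{|x\rangle\}_{x\in X}$ (a classical system). A (finite-dimensional) observable algebra is an algebra of the form $\mathcal{B}(\mathcal{H})\otimes\mathcal{C}(X)$ with $\mathcal{H}$ finite-dimensional and $X$ finite (quantum if $X$ is a singleton, classical if $\dim\mathcal{H}=1$, hybrid otherwise), viewed as a subalgebra of $\mathcal{B}(\mathcal{H}\otimes\mathbb{C}^{|X|})$. States of a system with observable algebra $\mathcal{A}$ are density operators (positive, trace one) belonging to $\mathcal{A}$. Operations are completely positive trace-preserving linear maps between observable algebras. An observable with outcomes in a finite set $Y$ on $\mathcal{A}$ is a family $(E^{(y)})_{y\in Y}$ of positive elements of $\mathcal{A}$ summing to $\mathbb{1}$. Protocol framework. Fix an even number $N$ of rounds. Alice has a private algebra $\mathcal{A}$, Bob a private algebra $\mathcal{B}$, and both share a public "mailbox" algebra $\mathcal{M}$.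 A strategy of Alice is a tuple $\sigma_A=(\rho_A^{(0)};T_A^{(2)},T_A^{(4)},\dots,T_A^{(N)};E_A)$ where $\rho_A^{(0)}$ is a state on $\mathcal{A}\otimes\mathcal{M}$, each $T_A^{(j)}:\mathcal{A}\otimes\mathcal{M}\to\mathcal{A}\otimes\mathcal{M}$ is an operation, and $E_A=(E_A^{(0)},E_A^{(1)},E_A^{(\emptyset)})$ is an observable on $\mathcal{A}$ with outcomes $\{0,1,\emptyset\}$. A strategy of Bob is $\sigma_B=(\rho_B^{(0)};T_B^{(1)},T_B^{(3)},\dots,T_B^{(N-1)};E_B)$ with $\rho_B^{(0)}$ a state on $\mathcal{B}$, operations $T_B^{(k)}:\mathcal{M}\otimes\mathcal{B}\to\mathcal{M}\otimes\mathcal{B}$ and an observable $E_B=(E_B^{(0)},E_B^{(1)},E_B^{(\emptyset)})$ on $\mathcal{B}$. The sets of such strategies are denoted $\Sigma_A(\mathcal{A},\mathcal{M})$ and $\Sigma_B(\mathcal{B},\mathcal{M})$. Given $\sigma_A,\sigma_B$, set $\rho^{(0)}=\rho_A^{(0)}\otimes\rho_B^{(0)}$ on $\mathcal{A}\otimes\mathcal{M}\otimes\mathcal{B}$ and $\rho^{(N)}=(T_A^{(N)}\otimes\mathrm{Id}_{\mathcal{B}})(\mathrm{Id}_{\mathcal{A}}\otimes T_B^{(N-1)})\cdots(T_A^{(2)}\otimes\mathrm{Id}_{\mathcal{B}})(\mathrm{Id}_{\mathcal{A}}\otimes T_B^{(1)})\rho^{(0)}$, and for $a,b\in\{0,1,\emptyset\}$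 define $\mathbb{P}(\sigma_A,\sigma_B;a,b)=\operatorname{tr}[(E_A^{(a)}\otimes\mathbb{1}\otimes E_B^{(b)})\rho^{(N)}]$. Definitions. A pair $(\sigma_A,\sigma_B)\in\Sigma_A(\mathcal{A},\mathcal{M})\times\Sigma_B(\mathcal{B},\mathcal{M})$ is a (strong) coin tossing protocol with bias $\epsilon\in[0,1/2]$ if (i) $\mathbb{P}(\sigma_A,\sigma_B;0,0)=\mathbb{P}(\sigma_A,\sigma_B;1,1)=1/2$; (ii) for every finite-dimensional observable algebra $\mathcal{R}$, every $\sigma_A'\in\Sigma_A(\mathcal{R},\mathcal{M})$ and every $x\in\{0,1\}$, $\mathbb{P}(\sigma_A',\sigma_B;x,x)\le 1/2+\epsilon$; (iii) for every finite-dimensional observable algebra $\mathcal{R}$, every $\sigma_B'\in\Sigma_B(\mathcal{R},\mathcal{M})$ and every $x\in\{0,1\}$, $\mathbb{P}(\sigma_A,\sigma_B';x,x)\le1/2+\epsilon$. It is a weak coin tossing protocol with bias $\epsilon$ if (i) holds and, for every finite-dimensional observable algebra $\mathcal{R}$, $\mathbb{P}(\sigma_A',\sigma_B;0,0)\le1/2+\epsilon$ for all $\sigma_A'\in\Sigma_A(\mathcal{R},\mathcal{M})$ and $\mathbb{P}(\sigma_A,\sigma_B';1,1)\le1/2+\epsilon$ for all $\sigma_B'\in\Sigma_B(\mathcal{R},\mathcal{M})$. *)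

theory Defs
  imports Complex_Main
begin

text \<open>Operators are represented as matrices nat \<Rightarrow> nat \<Rightarrow> complex (entries outside the
 relevant dimension are required to be zero where it matters).  An observable algebra
 B(C^d) \<otimes> C({0..<n}) is described by the pair (d,n); it acts on C^d \<otimes> C^n with index
 r = h*n + x (h < d quantum index, x < n classical index).  Tensor products of algebras
 are described by lists of such pairs, with Kronecker index ordering (first factor most
 significant).\<close>

type_synonym cmat = "nat \<Rightarrow> nat \<Rightarrow> complex"

fun adim :: "(nat \<times> nat) list \<Rightarrow> nat" where
  "adim [] = 1"
| "adim ((d, n) # fs) = d * n * adim fs"

fun cl_agree :: "(nat \<times> nat) list \<Rightarrow> nat \<Rightarrow> nat \<Rightarrow> bool" where
  "cl_agree [] i j = True"
| "cl_agree ((d, n) # fs) i j =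
     ((i div adim fs) mod n = (j div adim fs) mod n \<and> cl_agree fs (i mod adim fs) (j mod adim fs))"

definition in_alg :: "(nat \<times> nat) list \<Rightarrow> cmat \<Rightarrow> bool" where
  "in_alg fs M \<longleftrightarrow> (\<forall>i j. (adim fs \<le> i \<or> adim fs \<le> j \<or> \<not> cl_agree fs i j) \<longrightarrow> M i j = 0)"

definition psd :: "nat \<Rightarrow> cmat \<Rightarrow> bool" where
  "psd D M \<longleftrightarrow> (\<forall>v :: nat \<Rightarrow> complex.
      Im (\<Sum>i<D. \<Sum>j<D. cnj (v i) * M i j * v j) = 0 \<and>
      0 \<le> Re (\<Sum>i<D. \<Sum>j<D. cnj (v i) * M i j * v j))"

definition mtrace :: "nat \<Rightarrow> cmat \<Rightarrow> complex" where
  "mtrace D M = (\<Sum>i<D. M i i)"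

definition eye :: "nat \<Rightarrow> cmat" where
  "eye D = (\<lambda>i j. if i = j \<and> i < D then 1 else 0)"

definition mmul :: "nat \<Rightarrow> cmat \<Rightarrow> cmat \<Rightarrow> cmat" where
  "mmul D M N = (\<lambda>i j. \<Sum>k<D. M i k * N k j)"

definition kron :: "nat \<Rightarrow> cmat \<Rightarrow> cmat \<Rightarrow> cmat" where
  "kron De X Y = (\<lambda>i j. X (i div De) (j div De) * Y (i mod De) (j mod De))"

text \<open>(Id \<otimes> T) M, where T maps operators on C^Df to operators on C^Dg (acting on the
 second tensor factor, blockwise).\<close>
definition id_tensor :: "nat \<Rightarrow> nat \<Rightarrow> (cmat \<Rightarrow> cmat) \<Rightarrow> cmat \<Rightarrow> cmat" where
  "id_tensor Df Dg T M = (\<lambda>i j.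
     T (\<lambda>r s. if r < Df \<and> s < Df then M ((i div Dg) * Df + r) ((j div Dg) * Df + s) else 0)
       (i mod Dg) (j mod Dg))"

text \<open>(T \<otimes> Id) M, where T acts on the first factor and the second factor is C^De.\<close>
definition tensor_id :: "nat \<Rightarrow> (cmat \<Rightarrow> cmat) \<Rightarrow> cmat \<Rightarrow> cmat" where
  "tensor_id De T M = (\<lambda>i j.
     T (\<lambda>u u'. M (u * De + i mod De) (u' * De + j mod De)) (i div De) (j div De))"

definition is_state :: "(nat \<times> nat) list \<Rightarrow> cmat \<Rightarrow> bool" where
  "is_state fs \<rho> \<longleftrightarrow> in_alg fs \<rho> \<and> psd (adim fs) \<rho> \<and> mtrace (adim fs) \<rho> = 1"

definition is_operation :: "(nat \<times> nat) list \<Rightarrow> (nat \<times> nat) list \<Rightarrow> (cmat \<Rightarrow> cmat) \<Rightarrow> bool" where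
  "is_operation fs gs T \<longleftrightarrow>
     (\<forall>M. in_alg fs M \<longrightarrow> in_alg gs (T M)) \<and>
     (\<forall>M N c. in_alg fs M \<longrightarrow> in_alg fs N \<longrightarrow>
        T (\<lambda>i j. M i j + c * N i j) = (\<lambda>i j. T M i j + c * T N i j)) \<and>
     (\<forall>M. in_alg fs M \<longrightarrow> mtrace (adim gs) (T M) = mtrace (adim fs) M) \<and>
     (\<forall>k M. in_alg ((k, 1) # fs) M \<longrightarrow> psd (k * adim fs) M \<longrightarrow>
        psd (k * adim gs) (id_tensor (adim fs) (adim gs) T M))"

definition obs_alg :: "nat \<times> nat \<Rightarrow> bool" where
  "obs_alg a \<longleftrightarrow> 1 \<le> fst a \<and> 1 \<le> snd a"

definition classical_alg :: "nat \<Rightarrow> nat \<times> nat" where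
  "classical_alg n = (1, n)"

datatype outcome = Out0 | Out1 | Abort

definition is_observable :: "(nat \<times> nat) list \<Rightarrow> (outcome \<Rightarrow> cmat) \<Rightarrow> bool" where
  "is_observable fs E \<longleftrightarrow> (\<forall>w. in_alg fs (E w) \<and> psd (adim fs) (E w)) \<and>
     (\<lambda>i j. E Out0 i j + E Out1 i j + E Abort i j) = eye (adim fs)"

text \<open>A strategy: initial state, operations (index j = 1..N/2: for Alice T^(2j), for Bob
 T^(2j-1)), and final observable.\<close>
record strategy =
  st_init :: cmat
  st_ops :: "nat \<Rightarrow> cmat \<Rightarrow> cmat"
  st_meas :: "outcome \<Rightarrow> cmat"

definition stratA :: "nat \<Rightarrow> nat \<times> nat \<Rightarrow> nat \<times> nat \<Rightarrow> strategy \<Rightarrow> bool" where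
  "stratA N a m \<sigma> \<longleftrightarrow> is_state [a, m] (st_init \<sigma>) \<and>
     (\<forall>j\<in>{1..N div 2}. is_operation [a, m] [a, m] (st_ops \<sigma> j)) \<and>
     is_observable [a] (st_meas \<sigma>)"

definition stratB :: "nat \<Rightarrow> nat \<times> nat \<Rightarrow> nat \<times> nat \<Rightarrow> strategy \<Rightarrow> bool" where
  "stratB N b m \<sigma> \<longleftrightarrow> is_state [b] (st_init \<sigma>) \<and>
     (\<forall>j\<in>{1..N div 2}. is_operation [m, b] [m, b] (st_ops \<sigma> j)) \<and>
     is_observable [b] (st_meas \<sigma>)"

text \<open>State on A \<otimes> M \<otimes> B after k double rounds.\<close>
fun evolve :: "nat \<times> nat \<Rightarrow> nat \<times> nat \<Rightarrow> nat \<times> nat \<Rightarrow> strategy \<Rightarrow> strategy \<Rightarrow> nat \<Rightarrow> cmat" where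
  "evolve a m b \<sigma>A \<sigma>B 0 = kron (adim [b]) (st_init \<sigma>A) (st_init \<sigma>B)"
| "evolve a m b \<sigma>A \<sigma>B (Suc k) =
     tensor_id (adim [b]) (st_ops \<sigma>A (Suc k))
       (id_tensor (adim [m, b]) (adim [m, b]) (st_ops \<sigma>B (Suc k)) (evolve a m b \<sigma>A \<sigma>B k))"

definition prob :: "nat \<Rightarrow> nat \<times> nat \<Rightarrow> nat \<times> nat \<Rightarrow> nat \<times> nat \<Rightarrow> strategy \<Rightarrow> strategy \<Rightarrow>
    outcome \<Rightarrow> outcome \<Rightarrow> real" where
  "prob N a m b \<sigma>A \<sigma>B x y = Re (mtrace (adim [a, m, b])
     (mmul (adim [a, m, b])
        (kron (adim [b]) (kron (adim [m]) (st_meas \<sigma>A x) (eye (adim [m]))) (st_meas \<sigma>B y))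
        (evolve a m b \<sigma>A \<sigma>B (N div 2))))"

definition strong_coin_tossing :: "nat \<Rightarrow> nat \<times> nat \<Rightarrow> nat \<times> nat \<Rightarrow> nat \<times> nat \<Rightarrow> real \<Rightarrow>
    strategy \<Rightarrow> strategy \<Rightarrow> bool" where
  "strong_coin_tossing N a m b \<epsilon> \<sigma>A \<sigma>B \<longleftrightarrow>
     0 \<le> \<epsilon> \<and> \<epsilon> \<le> 1/2 \<and> stratA N a m \<sigma>A \<and> stratB N b m \<sigma>B \<and>
     prob N a m b \<sigma>A \<sigma>B Out0 Out0 = 1/2 \<and> prob N a m b \<sigma>A \<sigma>B Out1 Out1 = 1/2 \<and>
     (\<forall>r \<sigma>' x. obs_alg r \<longrightarrow> stratA N r m \<sigma>' \<longrightarrow> x \<in> {Out0, Out1} \<longrightarrow>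
        prob N r m b \<sigma>' \<sigma>B x x \<le> 1/2 + \<epsilon>) \<and>
     (\<forall>r \<sigma>' x. obs_alg r \<longrightarrow> stratB N r m \<sigma>' \<longrightarrow> x \<in> {Out0, Out1} \<longrightarrow>
        prob N a m r \<sigma>A \<sigma>' x x \<le> 1/2 + \<epsilon>)"

definition weak_coin_tossing :: "nat \<Rightarrow> nat \<times> nat \<Rightarrow> nat \<times> nat \<Rightarrow> nat \<times> nat \<Rightarrow> real \<Rightarrow>
    strategy \<Rightarrow> strategy \<Rightarrow> bool" where
  "weak_coin_tossing N a m b \<epsilon> \<sigma>A \<sigma>B \<longleftrightarrow>
     0 \<le> \<epsilon> \<and> \<epsilon> \<le> 1/2 \<and> stratA N a m \<sigma>A \<and> stratB N b m \<sigma>B \<and>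
     prob N a m b \<sigma>A \<sigma>B Out0 Out0 = 1/2 \<and> prob N a m b \<sigma>A \<sigma>B Out1 Out1 = 1/2 \<and>
     (\<forall>r \<sigma>'. obs_alg r \<longrightarrow> stratA N r m \<sigma>' \<longrightarrow> prob N r m b \<sigma>' \<sigma>B Out0 Out0 \<le> 1/2 + \<epsilon>) \<and>
     (\<forall>r \<sigma>'. obs_alg r \<longrightarrow> stratB N r m \<sigma>' \<longrightarrow> prob N a m r \<sigma>A \<sigma>' Out1 Out1 \<le> 1/2 + \<epsilon>)"

end

theory Submission
  imports Defs "HOL-Library.Countable"
begin

text \<open>With classical registers every operator in sight is diagonal, so a run of the protocol is
  a Markov chain on triples (Alice's register, mailbox, Bob's register), and outcome probabilities
  are expectations over its final distribution.  If the two agreeing outcomes each have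
  probability 1/2, they exhaust all probability, so every reachable final triple produces the same
  outcome on both sides with certainty.

  Now consider the finite game on the set of private states honest Bob may be in: Bob sends
  messages, Alice answers, and Alice wins if in the end every possible state of Bob outputs 0 with
  certainty.  If Alice has a winning strategy, she plays it while keeping the current set in her
  register, and Bob outputs 0 with probability 1.  Otherwise Bob can keep Alice from winning, so in
  the end some reachable state of honest Bob does not surely output 0, and by certain agreement
  honest Alice outputs 1 with certainty.  Either way one party can cheat and obtain its preferred
  outcome with probability 1, which exceeds \<open>1/2 + \<epsilon>\<close>.\<close>

lemma sum_lessThan_mult:
  fixes f :: "nat \<Rightarrow> 'a::comm_monoid_add"
  shows "(\<Sum>i<k*D. f i) = (\<Sum>u<k. \<Sum>y<D. f (u*D + y))"
proof -
  have "(\<Sum>i<k*D. f i) = (\<Sum>u<k. sum f {u*D..<u*D+D})"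
    by (rule sum.nat_group[symmetric])
  also have "\<dots> = (\<Sum>u<k. \<Sum>y<D. f (u*D + y))"
  proof (rule sum.cong[OF refl])
    fix u
    have "sum f {0 + u*D..<D + u*D} = sum (\<lambda>y. f (y + u*D)) {0..<D}"
      by (rule sum.shift_bounds_nat_ivl)
    then show "sum f {u*D..<u*D+D} = (\<Sum>y<D. f (u*D + y))"
      by (simp add: add.commute lessThan_atLeast0)
  qed
  finally show ?thesis .
qed

lemma pair_index_less: "x < n1 \<Longrightarrow> y < n2 \<Longrightarrow> x*n2 + y < n1*(n2::nat)"
proof -
  assume "x < n1" "y < n2"
  then have "Suc x \<le> n1" by simp
  from mult_le_mono1[OF this, of n2] have "n2 + x*n2 \<le> n1*n2" by simp
  then show ?thesis using \<open>y < n2\<close> by linarith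
qed

lemma pair_index_less_iff:
  fixes x y m n :: nat
  assumes "y < n"
  shows "x*n + y < m*n \<longleftrightarrow> x < m"
proof
  assume "x*n + y < m*n"
  then have "x*n < m*n" by linarith
  then show "x < m" by simp
qed (use assms pair_index_less in blast)

lemma pair_index_div_mod:
  fixes x y n :: nat
  assumes "y < n"
  shows "(x*n + y) div n = x" "(x*n + y) mod n = y"
  using assms by (simp_all add: add.commute[of "x*n"])

lemma pair_index_eq_iff:
  fixes x y x' y' n :: nat
  assumes "y < n" "y' < n"
  shows "x*n + y = x'*n + y' \<longleftrightarrow> x = x' \<and> y = y'"
  using pair_index_div_mod[OF assms(1)] pair_index_div_mod[OF assms(2)] by metis

lemma sum_pairs_flat:
  fixes G :: "nat \<Rightarrow> nat \<Rightarrow> 'a::comm_monoid_add"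
  shows "(\<Sum>x<n1. \<Sum>y<n2. G x y) = (\<Sum>z<n1*n2. G (z div n2) (z mod n2))"
  unfolding sum_lessThan_mult by (intro sum.cong refl) (simp add: pair_index_div_mod)

lemma div_mod_eq_iff: "(i div E = j div E \<and> i mod E = j mod E) \<longleftrightarrow> i = (j::nat)"
  by (metis div_mult_mod_eq)

lemma triple_index_div_mod:
  fixes a m b nM nB :: nat
  assumes "m < nM" "b < nB"
  shows "((a*nM + m)*nB + b) div nB div nM = a" "((a*nM + m)*nB + b) div nB mod nM = m"
    "((a*nM + m)*nB + b) mod nB = b"
  using assms by (simp_all add: pair_index_div_mod)

lemma triple_index_assoc: "(a*nM + m)*nB + b = a*(nM*nB) + (m*nB + (b::nat))"
  by (simp add: algebra_simps)

lemma triple_index_cases: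
  fixes i nA nM nB :: nat
  assumes "i < nA*(nM*nB)"
  obtains a m b where "a < nA" "m < nM" "b < nB" "i = (a*nM + m)*nB + b"
proof
  have "i < (nA * nM) * nB" using assms by (simp only: mult.assoc)
  then have "i div nB < nA * nM" by (rule less_mult_imp_div_less)
  then show "i div nB div nM < nA" by (rule less_mult_imp_div_less)
  have "nM * nB \<noteq> 0" using assms by (metis mult_0_right not_less_zero)
  then show "i div nB mod nM < nM" "i mod nB < nB" by simp_all
  show "i = (i div nB div nM * nM + i div nB mod nM) * nB + i mod nB" by simp
qed

lemma sum_lessThan_mult3:
  fixes f :: "nat \<Rightarrow> nat \<Rightarrow> nat \<Rightarrow> 'a::comm_monoid_add"
  shows "(\<Sum>i<nA*(nM*nB). f (i div nB div nM) (i div nB mod nM) (i mod nB))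
       = (\<Sum>a<nA. \<Sum>m<nM. \<Sum>b<nB. f a m b)"
proof -
  have "(\<Sum>i<nA*(nM*nB). f (i div nB div nM) (i div nB mod nM) (i mod nB))
      = (\<Sum>i<(nA*nM)*nB. f (i div nB div nM) (i div nB mod nM) (i mod nB))"
    by (simp add: mult.assoc)
  also have "\<dots> = (\<Sum>u<nA*nM. \<Sum>b<nB. f (u div nM) (u mod nM) b)"
    unfolding sum_lessThan_mult by (intro sum.cong refl) (simp add: pair_index_div_mod)
  also have "\<dots> = (\<Sum>a<nA. \<Sum>m<nM. \<Sum>b<nB. f a m b)"
    unfolding sum_lessThan_mult by (intro sum.cong refl) (simp add: pair_index_div_mod)
  finally show ?thesis .
qed

lemma sum_rotate3:
  "(\<Sum>i\<in>A. \<Sum>j\<in>B. \<Sum>k\<in>C. f i j k) = (\<Sum>k\<in>C. \<Sum>i\<in>A. \<Sum>j\<in>B. (f i j k :: 'a::comm_monoid_add))"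
proof -
  have "(\<Sum>i\<in>A. \<Sum>j\<in>B. \<Sum>k\<in>C. f i j k) = (\<Sum>i\<in>A. \<Sum>k\<in>C. \<Sum>j\<in>B. f i j k)"
    by (rule sum.cong[OF refl], rule sum.swap)
  also have "\<dots> = (\<Sum>k\<in>C. \<Sum>i\<in>A. \<Sum>j\<in>B. f i j k)" by (rule sum.swap)
  finally show ?thesis .
qed

lemma sum_swap_pairs:
  "(\<Sum>u\<in>A. \<Sum>y\<in>B. \<Sum>u'\<in>C. \<Sum>x\<in>E. F u y u' x)
     = (\<Sum>y\<in>B. \<Sum>x\<in>E. \<Sum>u\<in>A. \<Sum>u'\<in>C. (F u y u' x :: 'a::comm_monoid_add))"
proof -
  have "(\<Sum>u\<in>A. \<Sum>y\<in>B. \<Sum>u'\<in>C. \<Sum>x\<in>E. F u y u' x) = (\<Sum>u\<in>A. \<Sum>y\<in>B. \<Sum>x\<in>E. \<Sum>u'\<in>C. F u y u' x)"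
    by (rule sum.cong[OF refl], rule sum.cong[OF refl], rule sum.swap)
  also have "\<dots> = (\<Sum>y\<in>B. \<Sum>u\<in>A. \<Sum>x\<in>E. \<Sum>u'\<in>C. F u y u' x)" by (rule sum.swap)
  also have "\<dots> = (\<Sum>y\<in>B. \<Sum>x\<in>E. \<Sum>u\<in>A. \<Sum>u'\<in>C. F u y u' x)"
    by (rule sum.cong[OF refl], rule sum.swap)
  finally show ?thesis .
qed

lemma sum_sum_single:
  fixes f :: "nat \<Rightarrow> nat \<Rightarrow> 'a::comm_monoid_add"
  assumes "y < D" and "\<And>i j. i < D \<Longrightarrow> j < D \<Longrightarrow> i \<noteq> y \<or> j \<noteq> y \<Longrightarrow> f i j = 0"
  shows "(\<Sum>i<D. \<Sum>j<D. f i j) = f y y"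
proof -
  have "(\<Sum>j<D. f i j) = (if i = y then f y y else 0)" if "i < D" for i
  proof -
    have "(\<Sum>j<D. f i j) = (\<Sum>j<D. if i = y \<and> j = y then f y y else 0)"
      using assms(2) that by (intro sum.cong) auto
    then show ?thesis using assms(1) by simp
  qed
  then show ?thesis using assms(1) by simp
qed

lemma sum_if_factor:
  fixes f g :: "'b \<Rightarrow> 'a::comm_semiring_1"
  shows "(\<Sum>x\<in>A. (if P then f x else 0) * g x) = (if P then \<Sum>x\<in>A. f x * g x else 0)"
    and "(\<Sum>x\<in>A. g x * (if P then f x else 0)) = (if P then \<Sum>x\<in>A. g x * f x else 0)"
  by (cases P; simp)+

lemma sum_pos_iff_ex:
  fixes f :: "'b \<Rightarrow> real"
  assumes "finite A" "\<And>x. x \<in> A \<Longrightarrow> 0 \<le> f x"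
  shows "0 < sum f A \<longleftrightarrow> (\<exists>x\<in>A. 0 < f x)"
proof
  assume "0 < sum f A"
  then show "\<exists>x\<in>A. 0 < f x" using sum_nonneg_eq_0_iff[OF assms] assms(2) by force
next
  assume "\<exists>x\<in>A. 0 < f x"
  then obtain x where "x \<in> A" "0 < f x" by blast
  then show "0 < sum f A" using sum_pos2[OF assms(1), of x f] assms(2) by blast
qed

definition classical_factors :: "(nat \<times> nat) list \<Rightarrow> bool" where
  "classical_factors fs \<longleftrightarrow> (\<forall>p\<in>set fs. fst p = 1)"

lemma classical_factors_simps [simp]:
  "classical_factors []"
  "classical_factors ((d, n) # fs) \<longleftrightarrow> d = 1 \<and> classical_factors fs"
  by (auto simp: classical_factors_def)

definition diag_mat :: "nat \<Rightarrow> (nat \<Rightarrow> complex) \<Rightarrow> cmat" where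
  "diag_mat D c = (\<lambda>i j. if i = j \<and> i < D then c i else 0)"

definition unit_mat :: "nat \<Rightarrow> cmat" where
  "unit_mat x = (\<lambda>i j. if i = x \<and> j = x then 1 else 0)"

lemma cl_agree_refl: "cl_agree fs i i"
  by (induction fs arbitrary: i) auto

lemma cl_agree_classical:
  "classical_factors fs \<Longrightarrow> i < adim fs \<Longrightarrow> j < adim fs \<Longrightarrow> cl_agree fs i j \<Longrightarrow> i = j"
proof (induction fs arbitrary: i j)
  case Nil then show ?case by simp
next
  case (Cons p fs)
  obtain n where p: "p = (1, n)" and cf: "classical_factors fs"
    using Cons.prems(1) by (cases p) auto
  let ?A = "adim fs"
  have iA: "i < n * ?A" "j < n * ?A" using Cons.prems p by auto
  hence "i div ?A < n" "j div ?A < n"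
    by (simp_all add: less_mult_imp_div_less mult.commute)
  moreover have "?A > 0" using iA by (cases "?A = 0") auto
  ultimately have "i div ?A = j div ?A" "i mod ?A = j mod ?A"
    using Cons.prems(4) Cons.IH[OF cf] p by auto
  then show ?case by (metis div_mult_mod_eq)
qed

lemma in_alg_classical_iff:
  assumes "classical_factors fs"
  shows "in_alg fs M \<longleftrightarrow> (\<forall>i j. (i \<noteq> j \<or> adim fs \<le> i) \<longrightarrow> M i j = 0)"
  unfolding in_alg_def
  using cl_agree_classical[OF assms] cl_agree_refl
  by (metis linorder_not_le)

lemma in_alg_classical_eq_diag:
  "classical_factors fs \<Longrightarrow> in_alg fs M \<Longrightarrow> M = diag_mat (adim fs) (\<lambda>i. M i i)"
  by (auto simp: in_alg_classical_iff diag_mat_def fun_eq_iff)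

lemma diag_mat_in_alg: "classical_factors fs \<Longrightarrow> in_alg fs (diag_mat (adim fs) c)"
  by (auto simp: in_alg_classical_iff diag_mat_def)

lemma unit_mat_in_alg: "classical_factors fs \<Longrightarrow> x < adim fs \<Longrightarrow> in_alg fs (unit_mat x)"
  by (auto simp: in_alg_classical_iff unit_mat_def)

lemma diag_mat_cong: "(\<And>i. i < D \<Longrightarrow> c i = d i) \<Longrightarrow> diag_mat D c = diag_mat D d"
  by (auto simp: diag_mat_def fun_eq_iff)

lemma diag_mat_eq_sum_unit_mat: "diag_mat D c = (\<lambda>i j. \<Sum>x<D. c x * unit_mat x i j)"
proof (intro ext)
  fix i j
  have "(\<Sum>x<D. c x * unit_mat x i j) = (\<Sum>x<D. if x = i then (if i = j then c x else 0) else 0)"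
    by (intro sum.cong) (auto simp: unit_mat_def)
  then show "diag_mat D c i j = (\<Sum>x<D. c x * unit_mat x i j)"
    by (simp add: diag_mat_def)
qed

lemma unit_mat_eq_diag_mat:
  "x < D \<Longrightarrow> unit_mat x = diag_mat D (\<lambda>i. of_real (if i = x then 1 else 0))"
  by (auto simp: unit_mat_def diag_mat_def fun_eq_iff)

lemma kron_diag_mat:
  "kron E (diag_mat D c) (diag_mat E d) = diag_mat (D*E) (\<lambda>i. c (i div E) * d (i mod E))"
proof (cases "E = 0")
  case False
  show ?thesis
  proof (intro ext)
    fix i j
    have cond: "(i div E = j div E \<and> i div E < D \<and> i mod E = j mod E) \<longleftrightarrow> i = j \<and> i < D * E"
      using False div_mod_eq_iff[of i E j] by (auto simp: div_less_iff_less_mult)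
    have "kron E (diag_mat D c) (diag_mat E d) i j
        = (if i div E = j div E \<and> i div E < D \<and> i mod E = j mod E then c (i div E) * d (i mod E) else 0)"
      using False by (simp add: kron_def diag_mat_def)
    then show "kron E (diag_mat D c) (diag_mat E d) i j = diag_mat (D*E) (\<lambda>i. c (i div E) * d (i mod E)) i j"
      by (simp only: cond diag_mat_def)
  qed
qed (simp add: kron_def diag_mat_def fun_eq_iff)

definition quad_form :: "nat \<Rightarrow> cmat \<Rightarrow> (nat \<Rightarrow> complex) \<Rightarrow> complex" where
  "quad_form D M v = (\<Sum>i<D. \<Sum>j<D. cnj (v i) * M i j * v j)"

lemma psd_iff_quad_form: "psd D M \<longleftrightarrow> (\<forall>v. Im (quad_form D M v) = 0 \<and> 0 \<le> Re (quad_form D M v))"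
  by (simp add: psd_def quad_form_def)

lemma psd_cong:
  assumes "\<And>i j. i < D \<Longrightarrow> j < D \<Longrightarrow> M i j = M' i j"
  shows "psd D M \<longleftrightarrow> psd D M'"
proof -
  have "quad_form D M v = quad_form D M' v" for v
    unfolding quad_form_def using assms by (intro sum.cong refl) simp
  then show ?thesis unfolding psd_iff_quad_form by simp
qed

lemma psd_diag_entry:
  assumes "psd D M" "y < D"
  shows "M y y = of_real (Re (M y y)) \<and> 0 \<le> Re (M y y)"
proof -
  let ?v = "\<lambda>i. if i = y then 1 else 0"
  have "quad_form D M ?v = M y y"
    unfolding quad_form_def by (subst sum_sum_single[OF assms(2)]) auto
  moreover have "Im (quad_form D M ?v) = 0 \<and> 0 \<le> Re (quad_form D M ?v)"
    using assms(1) unfolding psd_iff_quad_form by blast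
  ultimately show ?thesis by (simp add: complex_eq_iff)
qed

lemma psd_diag_mat:
  assumes "\<And>i. i < D \<Longrightarrow> 0 \<le> c i"
  shows "psd D (diag_mat D (\<lambda>i. of_real (c i)))"
proof -
  have "(\<Sum>i<D. \<Sum>j<D. cnj (v i) * diag_mat D (\<lambda>i. of_real (c i)) i j * v j)
      = of_real (\<Sum>i<D. c i * (cmod (v i))^2)" for v
  proof -
    have "(\<Sum>j<D. cnj (v i) * diag_mat D (\<lambda>i. of_real (c i)) i j * v j)
        = of_real (c i * (cmod (v i))^2)" if "i < D" for i
    proof -
      have "(\<Sum>j<D. cnj (v i) * diag_mat D (\<lambda>i. of_real (c i)) i j * v j)
          = (\<Sum>j<D. if j = i then of_real (c i) * (v i * cnj (v i)) else 0)"
        by (intro sum.cong refl) (auto simp: diag_mat_def mult_ac)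
      also have "\<dots> = of_real (c i) * (v i * cnj (v i))" using that by simp
      also have "\<dots> = of_real (c i * (cmod (v i))^2)"
        by (simp only: complex_norm_square[symmetric] of_real_mult of_real_power)
      finally show ?thesis .
    qed
    then show ?thesis by simp
  qed
  moreover have "0 \<le> (\<Sum>i<D. c i * (cmod (v i))^2)" for v
    using assms by (intro sum_nonneg) simp
  ultimately show ?thesis unfolding psd_def
    by (simp del: of_real_sum)
qed

lemma psd_in_alg_classical_eq_diag:
  assumes "classical_factors fs" "in_alg fs M" "psd (adim fs) M"
  shows "M = diag_mat (adim fs) (\<lambda>i. of_real (Re (M i i)))"
proof -
  have "M = diag_mat (adim fs) (\<lambda>i. M i i)" by (rule in_alg_classical_eq_diag[OF assms(1,2)])
  also have "\<dots> = diag_mat (adim fs) (\<lambda>i. of_real (Re (M i i)))"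
    by (rule diag_mat_cong) (use psd_diag_entry[OF assms(3)] in blast)
  finally show ?thesis .
qed

lemma classical_state:
  assumes "is_state fs \<rho>" "classical_factors fs"
  shows "\<rho> = diag_mat (adim fs) (\<lambda>i. of_real (Re (\<rho> i i)))"
    and "i < adim fs \<Longrightarrow> 0 \<le> Re (\<rho> i i)"
    and "(\<Sum>i<adim fs. Re (\<rho> i i)) = 1"
proof -
  have "in_alg fs \<rho>" "psd (adim fs) \<rho>" "mtrace (adim fs) \<rho> = 1"
    using assms(1) by (auto simp: is_state_def)
  then show "\<rho> = diag_mat (adim fs) (\<lambda>i. of_real (Re (\<rho> i i)))" "i < adim fs \<Longrightarrow> 0 \<le> Re (\<rho> i i)"
    "(\<Sum>i<adim fs. Re (\<rho> i i)) = 1"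
    using psd_in_alg_classical_eq_diag[OF assms(2)] psd_diag_entry
    by (auto simp: mtrace_def simp flip: Re_sum)
qed

lemma classical_observable:
  assumes "is_observable fs E" "classical_factors fs"
  shows "E w = diag_mat (adim fs) (\<lambda>i. of_real (Re (E w i i)))"
    and "i < adim fs \<Longrightarrow> 0 \<le> Re (E w i i)"
    and "i < adim fs \<Longrightarrow> Re (E Out0 i i) + Re (E Out1 i i) + Re (E Abort i i) = 1"
proof -
  have "in_alg fs (E w)" "psd (adim fs) (E w)"
    using assms(1) by (auto simp: is_observable_def)
  then show "E w = diag_mat (adim fs) (\<lambda>i. of_real (Re (E w i i)))" "i < adim fs \<Longrightarrow> 0 \<le> Re (E w i i)"
    using psd_in_alg_classical_eq_diag[OF assms(2)] psd_diag_entry by auto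
  assume "i < adim fs"
  have sum_eye: "(\<lambda>i j. E Out0 i j + E Out1 i j + E Abort i j) = eye (adim fs)"
    using assms(1) by (simp add: is_observable_def)
  have "E Out0 i i + E Out1 i i + E Abort i i = eye (adim fs) i i"
    using fun_cong[OF fun_cong[OF sum_eye, of i], of i] by simp
  then have "Re (E Out0 i i + E Out1 i i + E Abort i i) = 1"
    using \<open>i < adim fs\<close> by (simp add: eye_def)
  then show "Re (E Out0 i i) + Re (E Out1 i i) + Re (E Abort i i) = 1" by simp
qed

section \<open>Operations between classical algebras are stochastic kernels\<close>

lemma operation_zero:
  assumes "is_operation fs gs T"
  shows "T (\<lambda>i j. 0) = (\<lambda>i j. 0)"
proof -
  have "in_alg fs (\<lambda>i j. 0)" by (simp add: in_alg_def)
  then have "T (\<lambda>i j. 0 + 1 * 0) = (\<lambda>i j. T (\<lambda>i j. 0) i j + 1 * T (\<lambda>i j. 0) i j)"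
    using assms unfolding is_operation_def by blast
  then show ?thesis by (simp add: fun_eq_iff)
qed

lemma operation_sum:
  assumes op: "is_operation fs gs T" and "finite S" and "\<forall>x\<in>S. in_alg fs (N x)"
  shows "T (\<lambda>i j. \<Sum>x\<in>S. c x * N x i j) = (\<lambda>i j. \<Sum>x\<in>S. c x * T (N x) i j)"
  using assms(2,3)
proof (induction S rule: finite_induct)
  case empty then show ?case using operation_zero[OF op] by simp
next
  case (insert y S)
  have "in_alg fs (\<lambda>i j. \<Sum>x\<in>S. c x * N x i j)"
    using insert.prems unfolding in_alg_def by auto
  then have "T (\<lambda>i j. (\<Sum>x\<in>S. c x * N x i j) + c y * N y i j)
      = (\<lambda>i j. T (\<lambda>i j. \<Sum>x\<in>S. c x * N x i j) i j + c y * T (N y) i j)"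
    using op insert.prems unfolding is_operation_def by blast
  then show ?case using insert by (simp add: add.commute)
qed

lemma in_alg_Cons_trivial: "in_alg ((1, 1) # fs) M \<longleftrightarrow> in_alg fs M"
proof -
  have "(adim fs \<le> i \<or> adim fs \<le> j \<or> \<not> cl_agree ((1, 1) # fs) i j)
    \<longleftrightarrow> (adim fs \<le> i \<or> adim fs \<le> j \<or> \<not> cl_agree fs i j)" for i j
    by (cases "adim fs \<le> i \<or> adim fs \<le> j") auto
  then show ?thesis unfolding in_alg_def by simp
qed

text \<open>Complete positivity with a trivial ancilla (k = 1) gives plain positivity.\<close>

lemma operation_psd:
  assumes op: "is_operation fs gs T" and M: "in_alg fs M" "psd (adim fs) M"
  shows "psd (adim gs) (T M)"
proof -
  let ?A = "adim fs" and ?B = "adim gs"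
  have cp: "\<forall>k M. in_alg ((k, 1) # fs) M \<longrightarrow> psd (k * ?A) M \<longrightarrow> psd (k * ?B) (id_tensor ?A ?B T M)"
    using op unfolding is_operation_def by blast
  have "in_alg ((1, 1) # fs) M" using M(1) in_alg_Cons_trivial by blast
  then have "psd (1 * ?B) (id_tensor ?A ?B T M)"
    using cp[rule_format, of 1 M] M(2) by simp
  moreover have "id_tensor ?A ?B T M i j = T M i j" if "i < ?B" "j < ?B" for i j
  proof -
    have M_restrict: "(\<lambda>r s. if r < ?A \<and> s < ?A then M r s else 0) = M"
      using M(1) by (auto simp: in_alg_def fun_eq_iff)
    show ?thesis
      using that by (simp only: id_tensor_def div_less mod_less mult_zero_left add_0 M_restrict)
  qed
  ultimately show ?thesis using psd_cong[of ?B "id_tensor ?A ?B T M" "T M"] by simp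
qed

definition transition :: "(cmat \<Rightarrow> cmat) \<Rightarrow> nat \<Rightarrow> nat \<Rightarrow> real" where
  "transition T x y = Re (T (unit_mat x) y y)"

definition stochastic :: "nat \<Rightarrow> (nat \<Rightarrow> nat \<Rightarrow> real) \<Rightarrow> bool" where
  "stochastic D K \<longleftrightarrow> (\<forall>x<D. \<forall>y<D. 0 \<le> K x y) \<and> (\<forall>x<D. (\<Sum>y<D. K x y) = 1)"

lemma operation_unit_mat:
  assumes op: "is_operation fs gs T" and cl: "classical_factors fs" "classical_factors gs"
    and x: "x < adim fs"
  shows "T (unit_mat x) = diag_mat (adim gs) (\<lambda>y. of_real (transition T x y))"
    and "y < adim gs \<Longrightarrow> 0 \<le> transition T x y"
    and "(\<Sum>y<adim gs. transition T x y) = 1"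
proof -
  have in_alg: "in_alg fs (unit_mat x)" by (rule unit_mat_in_alg[OF cl(1) x])
  have "psd (adim fs) (unit_mat x)"
    unfolding unit_mat_eq_diag_mat[OF x] by (rule psd_diag_mat) simp
  then have psd: "psd (adim gs) (T (unit_mat x))" by (rule operation_psd[OF op in_alg])
  have "T (unit_mat x) = diag_mat (adim gs) (\<lambda>y. T (unit_mat x) y y)"
    using op in_alg cl(2) in_alg_classical_eq_diag unfolding is_operation_def by blast
  also have "\<dots> = diag_mat (adim gs) (\<lambda>y. of_real (transition T x y))"
    using psd_diag_entry[OF psd] by (auto simp: diag_mat_def transition_def fun_eq_iff)
  finally show diag: "T (unit_mat x) = diag_mat (adim gs) (\<lambda>y. of_real (transition T x y))" .
  show "y < adim gs \<Longrightarrow> 0 \<le> transition T x y"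
    using psd_diag_entry[OF psd] by (simp add: transition_def)
  have "of_real (\<Sum>y<adim gs. transition T x y) = mtrace (adim gs) (T (unit_mat x))"
    unfolding diag by (simp add: mtrace_def diag_mat_def)
  also have "\<dots> = mtrace (adim fs) (unit_mat x)"
    using op in_alg unfolding is_operation_def by blast
  also have "\<dots> = 1" using x by (simp add: mtrace_def unit_mat_def)
  finally show "(\<Sum>y<adim gs. transition T x y) = 1" by (simp only: of_real_eq_1_iff)
qed

lemma stochastic_transition:
  assumes "is_operation fs fs T" "classical_factors fs"
  shows "stochastic (adim fs) (transition T)"
  unfolding stochastic_def using operation_unit_mat(2,3)[OF assms assms(2)] by simp

lemma operation_diag_mat:
  assumes op: "is_operation fs gs T" and cl: "classical_factors fs" "classical_factors gs"
  shows "T (diag_mat (adim fs) c)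
       = diag_mat (adim gs) (\<lambda>y. \<Sum>x<adim fs. c x * of_real (transition T x y))"
proof -
  have "T (diag_mat (adim fs) c) = (\<lambda>i j. \<Sum>x<adim fs. c x * T (unit_mat x) i j)"
    unfolding diag_mat_eq_sum_unit_mat
    by (rule operation_sum[OF op]) (auto intro: unit_mat_in_alg[OF cl(1)])
  also have "\<dots> = diag_mat (adim gs) (\<lambda>y. \<Sum>x<adim fs. c x * of_real (transition T x y))"
  proof (intro ext)
    fix i j
    have "(\<Sum>x<adim fs. c x * T (unit_mat x) i j)
        = (\<Sum>x<adim fs. c x * (if i = j \<and> i < adim gs then of_real (transition T x i) else 0))"
      by (rule sum.cong) (simp_all add: operation_unit_mat(1)[OF op cl] diag_mat_def)
    also have "\<dots> = diag_mat (adim gs) (\<lambda>y. \<Sum>x<adim fs. c x * of_real (transition T x y)) i j"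
      by (simp add: sum_if_factor diag_mat_def)
    finally show "(\<Sum>x<adim fs. c x * T (unit_mat x) i j)
        = diag_mat (adim gs) (\<lambda>y. \<Sum>x<adim fs. c x * of_real (transition T x y)) i j" .
  qed
  finally show ?thesis .
qed

lemma id_tensor_diag_mat:
  assumes op: "is_operation fs fs T" and cl: "classical_factors fs"
  shows "id_tensor (adim fs) (adim fs) T (diag_mat (k * adim fs) c)
       = diag_mat (k * adim fs)
           (\<lambda>i. \<Sum>x<adim fs. c (i div adim fs * adim fs + x) * of_real (transition T x (i mod adim fs)))"
proof (cases "adim fs = 0")
  case True
  then show ?thesis using operation_zero[OF op] by (simp add: id_tensor_def diag_mat_def)
next
  case False
  let ?D = "adim fs"
  show ?thesis
  proof (intro ext)
    fix i j
    let ?c = "\<lambda>r. if i div ?D = j div ?D \<and> i div ?D < k then c (i div ?D * ?D + r) else 0"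
    have block: "(\<lambda>r s. if r < ?D \<and> s < ?D then diag_mat (k*?D) c (i div ?D * ?D + r) (j div ?D * ?D + s) else 0)
        = diag_mat ?D ?c"
      by (auto simp: diag_mat_def fun_eq_iff pair_index_eq_iff pair_index_less_iff)
    have cond: "(i mod ?D = j mod ?D \<and> i div ?D = j div ?D \<and> i div ?D < k) \<longleftrightarrow> i = j \<and> i < k * ?D"
      using False div_mod_eq_iff[of i ?D j] by (auto simp: div_less_iff_less_mult)
    have "id_tensor ?D ?D T (diag_mat (k*?D) c) i j = T (diag_mat ?D ?c) (i mod ?D) (j mod ?D)"
      by (simp only: id_tensor_def block)
    also have "\<dots> = diag_mat ?D (\<lambda>y. \<Sum>x<?D. ?c x * of_real (transition T x y)) (i mod ?D) (j mod ?D)"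
      by (simp only: operation_diag_mat[OF op cl cl])
    also have "\<dots> = diag_mat (k*?D) (\<lambda>i. \<Sum>x<?D. c (i div ?D * ?D + x) * of_real (transition T x (i mod ?D))) i j"
      using False by (auto simp: diag_mat_def sum_if_factor simp flip: cond)
    finally show "id_tensor ?D ?D T (diag_mat (k*?D) c) i j
        = diag_mat (k*?D) (\<lambda>i. \<Sum>x<?D. c (i div ?D * ?D + x) * of_real (transition T x (i mod ?D))) i j" .
  qed
qed

lemma tensor_id_diag_mat:
  assumes op: "is_operation fs fs T" and cl: "classical_factors fs"
  shows "tensor_id E T (diag_mat (adim fs * E) c)
       = diag_mat (adim fs * E) (\<lambda>i. \<Sum>x<adim fs. c (x*E + i mod E) * of_real (transition T x (i div E)))"
proof (cases "E = 0")
  case True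
  then show ?thesis using operation_zero[OF op] by (simp add: tensor_id_def diag_mat_def)
next
  case False
  let ?D = "adim fs"
  show ?thesis
  proof (intro ext)
    fix i j
    let ?c = "\<lambda>u. if i mod E = j mod E then c (u*E + i mod E) else 0"
    have block: "(\<lambda>u u'. diag_mat (?D*E) c (u*E + i mod E) (u'*E + j mod E)) = diag_mat ?D ?c"
      using False by (auto simp: diag_mat_def fun_eq_iff pair_index_eq_iff pair_index_less_iff)
    have cond: "(i div E = j div E \<and> i div E < ?D \<and> i mod E = j mod E) \<longleftrightarrow> i = j \<and> i < ?D * E"
      using False div_mod_eq_iff[of i E j] by (auto simp: div_less_iff_less_mult)
    have "tensor_id E T (diag_mat (?D*E) c) i j = T (diag_mat ?D ?c) (i div E) (j div E)"
      by (simp only: tensor_id_def block)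
    also have "\<dots> = diag_mat ?D (\<lambda>y. \<Sum>x<?D. ?c x * of_real (transition T x y)) (i div E) (j div E)"
      by (simp only: operation_diag_mat[OF op cl cl])
    also have "\<dots> = diag_mat (?D*E) (\<lambda>i. \<Sum>x<?D. c (x*E + i mod E) * of_real (transition T x (i div E))) i j"
      by (auto simp: diag_mat_def sum_if_factor simp flip: cond)
    finally show "tensor_id E T (diag_mat (?D*E) c) i j
        = diag_mat (?D*E) (\<lambda>i. \<Sum>x<?D. c (x*E + i mod E) * of_real (transition T x (i div E))) i j" .
  qed
qed

section \<open>Every stochastic kernel is an operation\<close>

lemma quad_form_blocks:
  "quad_form (k*D) M v = (\<Sum>u<k. \<Sum>y<D. \<Sum>u'<k. \<Sum>y'<D.
      cnj (v (u*D+y)) * M (u*D+y) (u'*D+y') * v (u'*D+y'))"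
  unfolding quad_form_def sum_lessThan_mult ..

definition kernel_op :: "nat \<Rightarrow> (nat \<Rightarrow> nat \<Rightarrow> real) \<Rightarrow> cmat \<Rightarrow> cmat" where
  "kernel_op D K M = diag_mat D (\<lambda>y. \<Sum>x<D. M x x * of_real (K x y))"

lemma quad_form_block_transport:
  assumes "x < D" "y < D"
  shows "quad_form (k*D) M (\<lambda>i. if i mod D = x then v (i div D * D + y) else 0)
       = (\<Sum>u<k. \<Sum>u'<k. cnj (v (u*D+y)) * M (u*D+x) (u'*D+x) * v (u'*D+y))"
proof -
  let ?w = "\<lambda>i. if i mod D = x then v (i div D * D + y) else 0"
  have w: "?w (u*D+z) = (if z = x then v (u*D+y) else 0)" if "z < D" for u z
    using that by (simp add: pair_index_div_mod)
  have "quad_form (k*D) M ?w = (\<Sum>u<k. \<Sum>u'<k. \<Sum>z<D. \<Sum>z'<D.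
      cnj (?w (u*D+z)) * M (u*D+z) (u'*D+z') * ?w (u'*D+z'))"
    unfolding quad_form_blocks by (rule sum.cong[OF refl], rule sum.swap)
  also have "\<dots> = (\<Sum>u<k. \<Sum>u'<k. cnj (v (u*D+y)) * M (u*D+x) (u'*D+x) * v (u'*D+y))"
  proof (intro sum.cong refl)
    fix u u'
    have "(\<Sum>z<D. \<Sum>z'<D. cnj (?w (u*D+z)) * M (u*D+z) (u'*D+z') * ?w (u'*D+z'))
       = cnj (?w (u*D+x)) * M (u*D+x) (u'*D+x) * ?w (u'*D+x)"
      by (rule sum_sum_single[OF assms(1)]) (auto simp: w)
    then show "(\<Sum>z<D. \<Sum>z'<D. cnj (?w (u*D+z)) * M (u*D+z) (u'*D+z') * ?w (u'*D+z'))
       = cnj (v (u*D+y)) * M (u*D+x) (u'*D+x) * v (u'*D+y)"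
      using assms(1) by (simp add: w)
  qed
  finally show ?thesis .
qed

lemma quad_form_id_tensor_kernel_op:
  "quad_form (k*D) (id_tensor D D (kernel_op D K) M) v
     = (\<Sum>y<D. \<Sum>x<D. of_real (K x y)
          * quad_form (k*D) M (\<lambda>i. if i mod D = x then v (i div D * D + y) else 0))"
proof -
  let ?R = "id_tensor D D (kernel_op D K) M"
  have R: "?R (u*D+y) (u'*D+y') = (if y = y' then \<Sum>x<D. M (u*D+x) (u'*D+x) * of_real (K x y) else 0)"
    if "y < D" "y' < D" for u y u' y'
    using that by (simp add: id_tensor_def kernel_op_def diag_mat_def pair_index_div_mod)
  have "quad_form (k*D) ?R v = (\<Sum>u<k. \<Sum>y<D. \<Sum>u'<k.
      cnj (v (u*D+y)) * (\<Sum>x<D. M (u*D+x) (u'*D+x) * of_real (K x y)) * v (u'*D+y))"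
  proof -
    have "(\<Sum>y'<D. cnj (v (u*D+y)) * ?R (u*D+y) (u'*D+y') * v (u'*D+y'))
        = cnj (v (u*D+y)) * (\<Sum>x<D. M (u*D+x) (u'*D+x) * of_real (K x y)) * v (u'*D+y)"
      if "y < D" for u y u'
      using that by (simp add: R if_distrib if_distribR cong: if_cong)
    then show ?thesis unfolding quad_form_blocks by simp
  qed
  also have "\<dots> = (\<Sum>u<k. \<Sum>y<D. \<Sum>u'<k. \<Sum>x<D. of_real (K x y)
      * (cnj (v (u*D+y)) * M (u*D+x) (u'*D+x) * v (u'*D+y)))"
    by (simp add: sum_distrib_left sum_distrib_right mult_ac)
  also have "\<dots> = (\<Sum>y<D. \<Sum>x<D. \<Sum>u<k. \<Sum>u'<k. of_real (K x y)
      * (cnj (v (u*D+y)) * M (u*D+x) (u'*D+x) * v (u'*D+y)))"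
    by (rule sum_swap_pairs)
  also have "\<dots> = (\<Sum>y<D. \<Sum>x<D. of_real (K x y)
      * quad_form (k*D) M (\<lambda>i. if i mod D = x then v (i div D * D + y) else 0))"
    by (simp add: quad_form_block_transport sum_distrib_left)
  finally show ?thesis .
qed

lemma kernel_op_completely_positive:
  assumes K: "\<And>x y. x < D \<Longrightarrow> y < D \<Longrightarrow> 0 \<le> K x y" and M: "psd (k*D) M"
  shows "psd (k*D) (id_tensor D D (kernel_op D K) M)"
  unfolding psd_iff_quad_form quad_form_id_tensor_kernel_op
  using M K by (auto simp: psd_iff_quad_form intro!: sum_nonneg mult_nonneg_nonneg)

lemma is_operation_kernel_op:
  assumes cl: "classical_factors fs" and K: "stochastic (adim fs) K"
  shows "is_operation fs fs (kernel_op (adim fs) K)"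
  unfolding is_operation_def
proof (intro conjI allI impI)
  let ?D = "adim fs"
  show "in_alg fs (kernel_op ?D K M)" for M
    by (simp add: kernel_op_def diag_mat_in_alg[OF cl])
  show "kernel_op ?D K (\<lambda>i j. M i j + c * N i j) = (\<lambda>i j. kernel_op ?D K M i j + c * kernel_op ?D K N i j)"
    for M N c
    by (auto simp: kernel_op_def diag_mat_def fun_eq_iff sum.distrib sum_distrib_left algebra_simps)
  show "mtrace ?D (kernel_op ?D K M) = mtrace ?D M" for M
  proof -
    have "mtrace ?D (kernel_op ?D K M) = (\<Sum>y<?D. \<Sum>x<?D. M x x * of_real (K x y))"
      by (simp add: mtrace_def kernel_op_def diag_mat_def)
    also have "\<dots> = (\<Sum>x<?D. \<Sum>y<?D. M x x * of_real (K x y))" by (rule sum.swap)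
    also have "\<dots> = (\<Sum>x<?D. M x x * of_real (\<Sum>y<?D. K x y))"
      by (simp add: sum_distrib_left)
    also have "\<dots> = mtrace ?D M"
      unfolding mtrace_def using K by (intro sum.cong refl) (simp add: stochastic_def flip: of_real_sum)
    finally show ?thesis .
  qed
  show "psd (k * ?D) (id_tensor ?D ?D (kernel_op ?D K) M)" if "psd (k * ?D) M" for k M
    using kernel_op_completely_positive[OF _ that] K by (simp add: stochastic_def)
qed

lemma transition_kernel_op:
  assumes "x < D" "y < D"
  shows "transition (kernel_op D K) x y = K x y"
proof -
  have "(\<Sum>x'<D. unit_mat x x' x' * of_real (K x' y)) = (\<Sum>x'<D. if x' = x then of_real (K x' y) else 0)"
    by (intro sum.cong refl) (simp add: unit_mat_def)
  then show ?thesis using assms by (simp add: transition_def kernel_op_def diag_mat_def)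
qed

section \<open>Runs of classical protocols are Markov chains\<close>

text \<open>The diagonal entry of index \<open>(a*nM + m)*nB + b\<close> of a state on \<open>A \<otimes> M \<otimes> B\<close> is the
  probability that Alice's register holds \<open>a\<close>, the mailbox \<open>m\<close> and Bob's register \<open>b\<close>.\<close>

definition joint_state :: "nat \<Rightarrow> nat \<Rightarrow> nat \<Rightarrow> (nat \<Rightarrow> nat \<Rightarrow> nat \<Rightarrow> real) \<Rightarrow> cmat" where
  "joint_state nA nM nB p = diag_mat (nA*(nM*nB))
     (\<lambda>i. of_real (p (i div nB div nM) (i div nB mod nM) (i mod nB)))"

definition pair_step :: "nat \<Rightarrow> nat \<Rightarrow> (nat \<Rightarrow> nat \<Rightarrow> real) \<Rightarrow> (nat \<Rightarrow> nat \<Rightarrow> real) \<Rightarrow> nat \<Rightarrow> nat \<Rightarrow> real" where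
  "pair_step n1 n2 K f x' y' = (\<Sum>x<n1. \<Sum>y<n2. f x y * K (x*n2 + y) (x'*n2 + y'))"

definition bob_update :: "nat \<Rightarrow> nat \<Rightarrow> (nat \<Rightarrow> nat \<Rightarrow> real) \<Rightarrow> (nat \<Rightarrow> nat \<Rightarrow> nat \<Rightarrow> real) \<Rightarrow> nat \<Rightarrow> nat \<Rightarrow> nat \<Rightarrow> real" where
  "bob_update nM nB K p = (\<lambda>a. pair_step nM nB K (p a))"

definition alice_update :: "nat \<Rightarrow> nat \<Rightarrow> (nat \<Rightarrow> nat \<Rightarrow> real) \<Rightarrow> (nat \<Rightarrow> nat \<Rightarrow> nat \<Rightarrow> real) \<Rightarrow> nat \<Rightarrow> nat \<Rightarrow> nat \<Rightarrow> real" where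
  "alice_update nA nM K p = (\<lambda>a' m' b. pair_step nA nM K (\<lambda>a m. p a m b) a' m')"

lemma joint_state_cong:
  assumes "\<And>a m b. a < nA \<Longrightarrow> m < nM \<Longrightarrow> b < nB \<Longrightarrow> f ((a*nM + m)*nB + b) = of_real (p a m b)"
  shows "diag_mat (nA*(nM*nB)) f = joint_state nA nM nB p"
  unfolding joint_state_def
proof (rule diag_mat_cong)
  fix i assume "i < nA*(nM*nB)"
  then obtain a m b where "a < nA" "m < nM" "b < nB" "i = (a*nM + m)*nB + b"
    by (rule triple_index_cases)
  then show "f i = of_real (p (i div nB div nM) (i div nB mod nM) (i mod nB))"
    using assms by (simp add: triple_index_div_mod)
qed

lemma id_tensor_joint_state:
  assumes op: "is_operation [(1,nM),(1,nB)] [(1,nM),(1,nB)] T"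
  shows "id_tensor (nM*nB) (nM*nB) T (joint_state nA nM nB p)
       = joint_state nA nM nB (bob_update nM nB (transition T) p)"
proof -
  define c where "c = (\<lambda>i. complex_of_real (p (i div nB div nM) (i div nB mod nM) (i mod nB)))"
  let ?D = "nM*nB" and ?K = "transition T"
  have "id_tensor ?D ?D T (joint_state nA nM nB p)
      = diag_mat (nA*?D) (\<lambda>i. \<Sum>x<?D. c (i div ?D * ?D + x) * of_real (?K x (i mod ?D)))"
  proof -
    have "joint_state nA nM nB p = diag_mat (nA*?D) c" by (simp add: joint_state_def c_def)
    then show ?thesis using id_tensor_diag_mat[OF op, of nA c] by simp
  qed
  also have "\<dots> = joint_state nA nM nB (bob_update nM nB ?K p)"
  proof (rule joint_state_cong)
    fix a m b assume "a < nA" "m < nM" "b < nB"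
    then have i: "(a*nM + m)*nB + b = a*?D + (m*nB + b)" "m*nB + b < ?D"
      by (simp_all add: triple_index_assoc pair_index_less)
    have "(\<Sum>x<?D. c (((a*nM + m)*nB + b) div ?D * ?D + x) * of_real (?K x (((a*nM + m)*nB + b) mod ?D)))
        = (\<Sum>m'<nM. \<Sum>b'<nB. c ((a*nM + m')*nB + b') * of_real (?K (m'*nB + b') (m*nB + b)))"
      unfolding i pair_index_div_mod[OF i(2)] sum_lessThan_mult triple_index_assoc ..
    also have "\<dots> = of_real (\<Sum>m'<nM. \<Sum>b'<nB. p a m' b' * ?K (m'*nB + b') (m*nB + b))"
      by (simp add: c_def triple_index_div_mod)
    finally show "(\<Sum>x<?D. c (((a*nM + m)*nB + b) div ?D * ?D + x) * of_real (?K x (((a*nM + m)*nB + b) mod ?D)))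
        = of_real (bob_update nM nB ?K p a m b)"
      by (simp add: bob_update_def pair_step_def)
  qed
  finally show ?thesis .
qed

lemma tensor_id_joint_state:
  assumes op: "is_operation [(1,nA),(1,nM)] [(1,nA),(1,nM)] T"
  shows "tensor_id nB T (joint_state nA nM nB p) = joint_state nA nM nB (alice_update nA nM (transition T) p)"
proof -
  define c where "c = (\<lambda>i. complex_of_real (p (i div nB div nM) (i div nB mod nM) (i mod nB)))"
  let ?K = "transition T"
  have "tensor_id nB T (joint_state nA nM nB p)
      = diag_mat (nA*(nM*nB)) (\<lambda>i. \<Sum>x<nA*nM. c (x*nB + i mod nB) * of_real (?K x (i div nB)))"
  proof -
    have "joint_state nA nM nB p = diag_mat ((nA*nM)*nB) c" by (simp add: joint_state_def c_def mult.assoc)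
    then show ?thesis using tensor_id_diag_mat[OF op, of nB c] by (simp add: mult.assoc)
  qed
  also have "\<dots> = joint_state nA nM nB (alice_update nA nM ?K p)"
  proof (rule joint_state_cong)
    fix a m b assume "a < nA" "m < nM" "b < nB"
    then have "(\<Sum>x<nA*nM. c (x*nB + ((a*nM + m)*nB + b) mod nB) * of_real (?K x (((a*nM + m)*nB + b) div nB)))
        = (\<Sum>a'<nA. \<Sum>m'<nM. c ((a'*nM + m')*nB + b) * of_real (?K (a'*nM + m') (a*nM + m)))"
      unfolding sum_lessThan_mult by (simp add: pair_index_div_mod)
    also have "\<dots> = of_real (\<Sum>a'<nA. \<Sum>m'<nM. p a' m' b * ?K (a'*nM + m') (a*nM + m))"
      using \<open>b < nB\<close> by (simp add: c_def triple_index_div_mod)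
    finally show "(\<Sum>x<nA*nM. c (x*nB + ((a*nM + m)*nB + b) mod nB) * of_real (?K x (((a*nM + m)*nB + b) div nB)))
        = of_real (alice_update nA nM ?K p a m b)"
      by (simp add: alice_update_def pair_step_def)
  qed
  finally show ?thesis .
qed

lemma kron_joint_state:
  "kron nB (diag_mat (nA*nM) (\<lambda>i. of_real (\<alpha> i))) (diag_mat nB (\<lambda>i. of_real (\<beta> i)))
     = joint_state nA nM nB (\<lambda>a m b. \<alpha> (a*nM + m) * \<beta> b)"
  unfolding kron_diag_mat mult.assoc
  by (rule joint_state_cong) (simp add: pair_index_div_mod)

lemma mtrace_mmul_diag_mat:
  "mtrace D (mmul D (diag_mat D c) (diag_mat D d)) = (\<Sum>i<D. c i * d i)"
proof -
  have "(\<Sum>k<D. diag_mat D c i k * diag_mat D d k i) = c i * d i" if "i < D" for i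
  proof -
    have "(\<Sum>k<D. diag_mat D c i k * diag_mat D d k i) = (\<Sum>k<D. if k = i then c i * d i else 0)"
      by (intro sum.cong refl) (auto simp: diag_mat_def)
    then show ?thesis using that by simp
  qed
  then show ?thesis by (simp add: mtrace_def mmul_def)
qed

lemma eye_eq_diag_mat: "eye D = diag_mat D (\<lambda>_. 1)"
  by (simp add: eye_def diag_mat_def)

definition init_prob :: "strategy \<Rightarrow> nat \<Rightarrow> real" where
  "init_prob \<sigma> i = Re (st_init \<sigma> i i)"

definition meas_prob :: "strategy \<Rightarrow> outcome \<Rightarrow> nat \<Rightarrow> real" where
  "meas_prob \<sigma> w i = Re (st_meas \<sigma> w i i)"

lemma stratA_classical:
  assumes "stratA N (classical_alg nA) (classical_alg nM) \<sigma>"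
  shows "st_init \<sigma> = diag_mat (nA*nM) (\<lambda>i. of_real (init_prob \<sigma> i))"
    and "i < nA*nM \<Longrightarrow> 0 \<le> init_prob \<sigma> i"
    and "(\<Sum>i<nA*nM. init_prob \<sigma> i) = 1"
    and "j \<in> {1..N div 2} \<Longrightarrow> is_operation [(1,nA),(1,nM)] [(1,nA),(1,nM)] (st_ops \<sigma> j)"
    and "j \<in> {1..N div 2} \<Longrightarrow> stochastic (nA*nM) (transition (st_ops \<sigma> j))"
    and "st_meas \<sigma> w = diag_mat nA (\<lambda>i. of_real (meas_prob \<sigma> w i))"
    and "i < nA \<Longrightarrow> 0 \<le> meas_prob \<sigma> w i"
    and "i < nA \<Longrightarrow> meas_prob \<sigma> Out0 i + meas_prob \<sigma> Out1 i + meas_prob \<sigma> Abort i = 1"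
proof -
  have st: "is_state [(1,nA),(1,nM)] (st_init \<sigma>)"
    and op: "\<And>j. j \<in> {1..N div 2} \<Longrightarrow> is_operation [(1,nA),(1,nM)] [(1,nA),(1,nM)] (st_ops \<sigma> j)"
    and obs: "is_observable [(1,nA)] (st_meas \<sigma>)"
    using assms by (simp_all add: stratA_def classical_alg_def)
  show "st_init \<sigma> = diag_mat (nA*nM) (\<lambda>i. of_real (init_prob \<sigma> i))"
    "i < nA*nM \<Longrightarrow> 0 \<le> init_prob \<sigma> i" "(\<Sum>i<nA*nM. init_prob \<sigma> i) = 1"
    using classical_state[OF st] by (simp_all add: init_prob_def)
  show "j \<in> {1..N div 2} \<Longrightarrow> is_operation [(1,nA),(1,nM)] [(1,nA),(1,nM)] (st_ops \<sigma> j)"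
    by (rule op)
  show "j \<in> {1..N div 2} \<Longrightarrow> stochastic (nA*nM) (transition (st_ops \<sigma> j))"
    using stochastic_transition[OF op] by simp
  show "st_meas \<sigma> w = diag_mat nA (\<lambda>i. of_real (meas_prob \<sigma> w i))"
    "i < nA \<Longrightarrow> 0 \<le> meas_prob \<sigma> w i"
    "i < nA \<Longrightarrow> meas_prob \<sigma> Out0 i + meas_prob \<sigma> Out1 i + meas_prob \<sigma> Abort i = 1"
    using classical_observable[OF obs] by (simp_all add: meas_prob_def)
qed

lemma stratB_classical:
  assumes "stratB N (classical_alg nB) (classical_alg nM) \<sigma>"
  shows "st_init \<sigma> = diag_mat nB (\<lambda>i. of_real (init_prob \<sigma> i))"
    and "i < nB \<Longrightarrow> 0 \<le> init_prob \<sigma> i"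
    and "(\<Sum>i<nB. init_prob \<sigma> i) = 1"
    and "j \<in> {1..N div 2} \<Longrightarrow> is_operation [(1,nM),(1,nB)] [(1,nM),(1,nB)] (st_ops \<sigma> j)"
    and "j \<in> {1..N div 2} \<Longrightarrow> stochastic (nM*nB) (transition (st_ops \<sigma> j))"
    and "st_meas \<sigma> w = diag_mat nB (\<lambda>i. of_real (meas_prob \<sigma> w i))"
    and "i < nB \<Longrightarrow> 0 \<le> meas_prob \<sigma> w i"
    and "i < nB \<Longrightarrow> meas_prob \<sigma> Out0 i + meas_prob \<sigma> Out1 i + meas_prob \<sigma> Abort i = 1"
proof -
  have st: "is_state [(1,nB)] (st_init \<sigma>)"
    and op: "\<And>j. j \<in> {1..N div 2} \<Longrightarrow> is_operation [(1,nM),(1,nB)] [(1,nM),(1,nB)] (st_ops \<sigma> j)"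
    and obs: "is_observable [(1,nB)] (st_meas \<sigma>)"
    using assms by (simp_all add: stratB_def classical_alg_def)
  show "st_init \<sigma> = diag_mat nB (\<lambda>i. of_real (init_prob \<sigma> i))"
    "i < nB \<Longrightarrow> 0 \<le> init_prob \<sigma> i" "(\<Sum>i<nB. init_prob \<sigma> i) = 1"
    using classical_state[OF st] by (simp_all add: init_prob_def)
  show "j \<in> {1..N div 2} \<Longrightarrow> is_operation [(1,nM),(1,nB)] [(1,nM),(1,nB)] (st_ops \<sigma> j)"
    by (rule op)
  show "j \<in> {1..N div 2} \<Longrightarrow> stochastic (nM*nB) (transition (st_ops \<sigma> j))"
    using stochastic_transition[OF op] by simp
  show "st_meas \<sigma> w = diag_mat nB (\<lambda>i. of_real (meas_prob \<sigma> w i))"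
    "i < nB \<Longrightarrow> 0 \<le> meas_prob \<sigma> w i"
    "i < nB \<Longrightarrow> meas_prob \<sigma> Out0 i + meas_prob \<sigma> Out1 i + meas_prob \<sigma> Abort i = 1"
    using classical_observable[OF obs] by (simp_all add: meas_prob_def)
qed

fun joint_dist :: "nat \<Rightarrow> nat \<Rightarrow> nat \<Rightarrow> strategy \<Rightarrow> strategy \<Rightarrow> nat \<Rightarrow> nat \<Rightarrow> nat \<Rightarrow> nat \<Rightarrow> real" where
  "joint_dist nA nM nB \<sigma>A \<sigma>B 0 = (\<lambda>a m b. init_prob \<sigma>A (a*nM + m) * init_prob \<sigma>B b)"
| "joint_dist nA nM nB \<sigma>A \<sigma>B (Suc k) =
     alice_update nA nM (transition (st_ops \<sigma>A (Suc k)))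
       (bob_update nM nB (transition (st_ops \<sigma>B (Suc k))) (joint_dist nA nM nB \<sigma>A \<sigma>B k))"

lemma evolve_classical:
  assumes sA: "stratA N (classical_alg nA) (classical_alg nM) \<sigma>A"
    and sB: "stratB N (classical_alg nB) (classical_alg nM) \<sigma>B"
  shows "k \<le> N div 2 \<Longrightarrow> evolve (classical_alg nA) (classical_alg nM) (classical_alg nB) \<sigma>A \<sigma>B k
           = joint_state nA nM nB (joint_dist nA nM nB \<sigma>A \<sigma>B k)"
proof (induction k)
  case 0
  show ?case
    using kron_joint_state[of nB nA nM "init_prob \<sigma>A" "init_prob \<sigma>B"]
    by (simp add: classical_alg_def stratA_classical(1)[OF sA] stratB_classical(1)[OF sB])
next
  case (Suc k)
  then have j: "Suc k \<in> {1..N div 2}" by simp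
  show ?case
    using Suc stratA_classical(4)[OF sA j] stratB_classical(4)[OF sB j]
    by (simp add: classical_alg_def id_tensor_joint_state tensor_id_joint_state)
qed

lemma prob_classical:
  assumes sA: "stratA N (classical_alg nA) (classical_alg nM) \<sigma>A"
    and sB: "stratB N (classical_alg nB) (classical_alg nM) \<sigma>B"
  shows "prob N (classical_alg nA) (classical_alg nM) (classical_alg nB) \<sigma>A \<sigma>B x y =
    (\<Sum>a<nA. \<Sum>m<nM. \<Sum>b<nB. meas_prob \<sigma>A x a * meas_prob \<sigma>B y b * joint_dist nA nM nB \<sigma>A \<sigma>B (N div 2) a m b)"
proof -
  let ?p = "joint_dist nA nM nB \<sigma>A \<sigma>B (N div 2)"
  have "kron nB (kron nM (st_meas \<sigma>A x) (eye nM)) (st_meas \<sigma>B y)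
      = diag_mat (nA*(nM*nB)) (\<lambda>i. of_real (meas_prob \<sigma>A x (i div nB div nM) * meas_prob \<sigma>B y (i mod nB)))"
    by (simp add: stratA_classical(6)[OF sA] stratB_classical(6)[OF sB] eye_eq_diag_mat kron_diag_mat
        mult.assoc)
  moreover have "evolve (classical_alg nA) (classical_alg nM) (classical_alg nB) \<sigma>A \<sigma>B (N div 2)
      = joint_state nA nM nB ?p"
    by (rule evolve_classical[OF sA sB order_refl])
  ultimately have "prob N (classical_alg nA) (classical_alg nM) (classical_alg nB) \<sigma>A \<sigma>B x y
      = (\<Sum>i<nA*(nM*nB). meas_prob \<sigma>A x (i div nB div nM) * meas_prob \<sigma>B y (i mod nB)
          * ?p (i div nB div nM) (i div nB mod nM) (i mod nB))"
    by (simp add: prob_def classical_alg_def joint_state_def mtrace_mmul_diag_mat flip: of_real_mult)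
  also have "\<dots> = (\<Sum>a<nA. \<Sum>m<nM. \<Sum>b<nB. meas_prob \<sigma>A x a * meas_prob \<sigma>B y b * ?p a m b)"
    by (rule sum_lessThan_mult3[where f = "\<lambda>a m b. meas_prob \<sigma>A x a * meas_prob \<sigma>B y b * ?p a m b"])
  finally show ?thesis .
qed

definition is_dist :: "nat \<Rightarrow> nat \<Rightarrow> nat \<Rightarrow> (nat \<Rightarrow> nat \<Rightarrow> nat \<Rightarrow> real) \<Rightarrow> bool" where
  "is_dist nA nM nB p \<longleftrightarrow> (\<forall>a<nA. \<forall>m<nM. \<forall>b<nB. 0 \<le> p a m b) \<and> (\<Sum>a<nA. \<Sum>m<nM. \<Sum>b<nB. p a m b) = 1"

lemma pair_step_flat:
  "pair_step n1 n2 K f x' y' = (\<Sum>z<n1*n2. f (z div n2) (z mod n2) * K z (x'*n2 + y'))"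
  unfolding pair_step_def sum_pairs_flat by simp

lemma pair_step_nonneg:
  assumes K: "stochastic (n1*n2) K" and f: "\<And>x y. x < n1 \<Longrightarrow> y < n2 \<Longrightarrow> 0 \<le> f x y"
    and "x' < n1" "y' < n2"
  shows "0 \<le> pair_step n1 n2 K f x' y'"
  unfolding pair_step_def using assms pair_index_less
  by (auto simp: stochastic_def intro!: sum_nonneg mult_nonneg_nonneg)

lemma sum_pair_step:
  assumes K: "stochastic (n1*n2) K"
  shows "(\<Sum>x'<n1. \<Sum>y'<n2. pair_step n1 n2 K f x' y') = (\<Sum>x<n1. \<Sum>y<n2. f x y)"
proof -
  let ?f = "\<lambda>z. f (z div n2) (z mod n2)"
  have "(\<Sum>x'<n1. \<Sum>y'<n2. pair_step n1 n2 K f x' y')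
      = (\<Sum>z'<n1*n2. pair_step n1 n2 K f (z' div n2) (z' mod n2))"
    by (rule sum_pairs_flat)
  also have "\<dots> = (\<Sum>z'<n1*n2. \<Sum>z<n1*n2. ?f z * K z z')"
    by (simp add: pair_step_flat)
  also have "\<dots> = (\<Sum>z<n1*n2. ?f z * (\<Sum>z'<n1*n2. K z z'))"
    by (subst sum.swap) (simp add: sum_distrib_left)
  also have "\<dots> = (\<Sum>z<n1*n2. ?f z)"
    using K by (simp add: stochastic_def)
  finally show ?thesis by (simp add: sum_pairs_flat)
qed

lemma pair_step_pos_iff:
  assumes K: "stochastic (n1*n2) K" and f: "\<And>x y. x < n1 \<Longrightarrow> y < n2 \<Longrightarrow> 0 \<le> f x y"
    and x': "x' < n1" and y': "y' < n2"
  shows "0 < pair_step n1 n2 K f x' y' \<longleftrightarrow> (\<exists>x<n1. \<exists>y<n2. 0 < f x y \<and> 0 < K (x*n2 + y) (x'*n2 + y'))"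
proof -
  have nonneg: "0 \<le> f x y" "0 \<le> K (x*n2 + y) (x'*n2 + y')" if "x < n1" "y < n2" for x y
    using f K that x' y' pair_index_less by (auto simp: stochastic_def)
  have "0 < pair_step n1 n2 K f x' y' \<longleftrightarrow> (\<exists>x<n1. 0 < (\<Sum>y<n2. f x y * K (x*n2 + y) (x'*n2 + y')))"
    unfolding pair_step_def using nonneg by (subst sum_pos_iff_ex) (auto intro!: sum_nonneg)
  also have "\<dots> \<longleftrightarrow> (\<exists>x<n1. \<exists>y<n2. 0 < f x y * K (x*n2 + y) (x'*n2 + y'))"
    using nonneg by (intro ex_cong1 conj_cong refl, subst sum_pos_iff_ex) auto
  also have "\<dots> \<longleftrightarrow> (\<exists>x<n1. \<exists>y<n2. 0 < f x y \<and> 0 < K (x*n2 + y) (x'*n2 + y'))"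
    by (intro ex_cong1 conj_cong refl) (use nonneg in \<open>fastforce simp: zero_less_mult_iff\<close>)
  finally show ?thesis .
qed

lemma is_dist_bob_update:
  assumes K: "stochastic (nM*nB) K" and p: "is_dist nA nM nB p"
  shows "is_dist nA nM nB (bob_update nM nB K p)"
  using p pair_step_nonneg[OF K] sum_pair_step[OF K]
  by (simp add: is_dist_def bob_update_def)

lemma is_dist_alice_update:
  assumes K: "stochastic (nA*nM) K" and p: "is_dist nA nM nB p"
  shows "is_dist nA nM nB (alice_update nA nM K p)"
proof -
  have "(\<Sum>a'<nA. \<Sum>m'<nM. \<Sum>b<nB. alice_update nA nM K p a' m' b)
      = (\<Sum>b<nB. \<Sum>a'<nA. \<Sum>m'<nM. pair_step nA nM K (\<lambda>a m. p a m b) a' m')"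
    unfolding alice_update_def by (rule sum_rotate3)
  also have "\<dots> = (\<Sum>b<nB. \<Sum>a<nA. \<Sum>m<nM. p a m b)"
    by (simp add: sum_pair_step[OF K])
  also have "\<dots> = (\<Sum>a<nA. \<Sum>m<nM. \<Sum>b<nB. p a m b)"
    by (rule sum_rotate3[symmetric])
  finally show ?thesis
    using p pair_step_nonneg[OF K] by (simp add: is_dist_def alice_update_def)
qed

lemma bob_update_pos_iff:
  assumes K: "stochastic (nM*nB) K" and p: "is_dist nA nM nB p"
    and "a < nA" "m' < nM" "b' < nB"
  shows "0 < bob_update nM nB K p a m' b'
     \<longleftrightarrow> (\<exists>m<nM. \<exists>b<nB. 0 < p a m b \<and> 0 < K (m*nB + b) (m'*nB + b'))"
  unfolding bob_update_def using assms by (intro pair_step_pos_iff) (auto simp: is_dist_def)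

lemma alice_update_pos_iff:
  assumes K: "stochastic (nA*nM) K" and p: "is_dist nA nM nB p"
    and "a' < nA" "m' < nM" "b < nB"
  shows "0 < alice_update nA nM K p a' m' b
     \<longleftrightarrow> (\<exists>a<nA. \<exists>m<nM. 0 < p a m b \<and> 0 < K (a*nM + m) (a'*nM + m'))"
  unfolding alice_update_def using assms by (intro pair_step_pos_iff) (auto simp: is_dist_def)

lemma expectation_eq_one:
  assumes p: "is_dist nA nM nB p"
    and g: "\<And>a m b. a < nA \<Longrightarrow> m < nM \<Longrightarrow> b < nB \<Longrightarrow> 0 < p a m b \<Longrightarrow> g a m b = 1"
  shows "(\<Sum>a<nA. \<Sum>m<nM. \<Sum>b<nB. g a m b * p a m b) = 1"
proof -
  have "g a m b * p a m b = p a m b" if "a < nA" "m < nM" "b < nB" for a m b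
    using p g[OF that] that unfolding is_dist_def by (cases "p a m b = 0") (auto simp: less_le)
  then have "(\<Sum>a<nA. \<Sum>m<nM. \<Sum>b<nB. g a m b * p a m b) = (\<Sum>a<nA. \<Sum>m<nM. \<Sum>b<nB. p a m b)"
    by (intro sum.cong refl) auto
  then show ?thesis using p by (simp add: is_dist_def)
qed

lemma expectation_eq_oneD:
  assumes p: "is_dist nA nM nB p"
    and g: "\<And>a m b. a < nA \<Longrightarrow> m < nM \<Longrightarrow> b < nB \<Longrightarrow> g a m b \<le> 1"
    and sum_one: "(\<Sum>a<nA. \<Sum>m<nM. \<Sum>b<nB. g a m b * p a m b) = 1"
    and pt: "a < nA" "m < nM" "b < nB" "0 < p a m b"
  shows "g a m b = 1"
proof (rule ccontr)
  assume "g a m b \<noteq> 1"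
  then have "0 < (1 - g a m b) * p a m b" using g pt by (simp add: less_le)
  moreover have nonneg: "0 \<le> (1 - g a' m' b') * p a' m' b'" if "a' < nA" "m' < nM" "b' < nB" for a' m' b'
    using g p that unfolding is_dist_def by simp
  ultimately have "0 < (\<Sum>b<nB. (1 - g a m b) * p a m b)"
    using pt by (subst sum_pos_iff_ex) auto
  then have "0 < (\<Sum>m<nM. \<Sum>b<nB. (1 - g a m b) * p a m b)"
    using pt nonneg by (subst sum_pos_iff_ex) (auto intro!: sum_nonneg)
  then have "0 < (\<Sum>a<nA. \<Sum>m<nM. \<Sum>b<nB. (1 - g a m b) * p a m b)"
    using pt nonneg by (subst sum_pos_iff_ex) (auto intro!: sum_nonneg)
  moreover have "(\<Sum>a<nA. \<Sum>m<nM. \<Sum>b<nB. (1 - g a m b) * p a m b) = 0"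
    using p sum_one by (simp add: is_dist_def left_diff_distrib sum_subtractf)
  ultimately show False by simp
qed

lemma is_dist_joint_dist:
  assumes sA: "stratA N (classical_alg nA) (classical_alg nM) \<sigma>A"
    and sB: "stratB N (classical_alg nB) (classical_alg nM) \<sigma>B"
  shows "k \<le> N div 2 \<Longrightarrow> is_dist nA nM nB (joint_dist nA nM nB \<sigma>A \<sigma>B k)"
proof (induction k)
  case 0
  have "(\<Sum>a<nA. \<Sum>m<nM. \<Sum>b<nB. init_prob \<sigma>A (a*nM + m) * init_prob \<sigma>B b)
      = (\<Sum>a<nA. \<Sum>m<nM. init_prob \<sigma>A (a*nM + m) * (\<Sum>b<nB. init_prob \<sigma>B b))"
    by (simp add: sum_distrib_left)
  also have "\<dots> = (\<Sum>i<nA*nM. init_prob \<sigma>A i) * (\<Sum>b<nB. init_prob \<sigma>B b)"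
    by (simp add: sum_lessThan_mult sum_distrib_right)
  finally have "(\<Sum>a<nA. \<Sum>m<nM. \<Sum>b<nB. init_prob \<sigma>A (a*nM + m) * init_prob \<sigma>B b)
      = (\<Sum>i<nA*nM. init_prob \<sigma>A i) * (\<Sum>b<nB. init_prob \<sigma>B b)" .
  then show ?case
    using stratA_classical(2,3)[OF sA] stratB_classical(2,3)[OF sB] pair_index_less
    by (simp add: is_dist_def)
next
  case (Suc k)
  then have "Suc k \<in> {1..N div 2}" by simp
  then show ?case
    using Suc stratA_classical(5)[OF sA] stratB_classical(5)[OF sB]
    by (simp add: is_dist_alice_update is_dist_bob_update)
qed

section \<open>A fair classical protocol forces certain agreement\<close>

lemma agreement_le_one:
  fixes x0 x1 y0 y1 :: real
  assumes "0 \<le> x0" "0 \<le> x1" "0 \<le> y0" "0 \<le> y1" "x0 + x1 \<le> 1" "y0 + y1 \<le> 1"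
  shows "x0 * y0 + x1 * y1 \<le> 1"
proof -
  have "x0 * y0 \<le> x0" "x1 * y1 \<le> x1" using assms by (simp_all add: mult_left_le)
  then show ?thesis using assms by linarith
qed

lemma agreement_eq_one:
  fixes x0 x1 y0 y1 :: real
  assumes "0 \<le> x0" "0 \<le> x1" "0 \<le> y0" "0 \<le> y1" "x0 + x1 \<le> 1" "y0 + y1 \<le> 1"
    and "x0 * y0 + x1 * y1 = 1"
  shows "(x0 = 1 \<and> y0 = 1) \<or> (x1 = 1 \<and> y1 = 1)"
proof -
  have "x0 * y0 \<le> x0" "x1 * y1 \<le> x1" using assms by (simp_all add: mult_left_le)
  then have sum_x: "x0 + x1 = 1" using assms by linarith
  then have "x0 * (1 - y0) + x1 * (1 - y1) = 0" using assms(7) by (simp add: algebra_simps)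
  moreover have "0 \<le> x0 * (1 - y0)" "0 \<le> x1 * (1 - y1)" using assms by simp_all
  ultimately have "x0 * (1 - y0) = 0" "x1 * (1 - y1) = 0" by linarith+
  then show ?thesis using sum_x assms(3,6) by (cases "x0 = 0") auto
qed

locale fair_classical_protocol =
  fixes N nA nM nB :: nat and \<sigma>A \<sigma>B :: strategy
  assumes stratA: "stratA N (classical_alg nA) (classical_alg nM) \<sigma>A"
    and stratB: "stratB N (classical_alg nB) (classical_alg nM) \<sigma>B"
    and prob00: "prob N (classical_alg nA) (classical_alg nM) (classical_alg nB) \<sigma>A \<sigma>B Out0 Out0 = 1/2"
    and prob11: "prob N (classical_alg nA) (classical_alg nM) (classical_alg nB) \<sigma>A \<sigma>B Out1 Out1 = 1/2"
begin

abbreviation "n \<equiv> N div 2"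
abbreviation "KA j \<equiv> transition (st_ops \<sigma>A j)"
abbreviation "KB j \<equiv> transition (st_ops \<sigma>B j)"
abbreviation "P k \<equiv> joint_dist nA nM nB \<sigma>A \<sigma>B k"

lemma is_dist_P: "k \<le> n \<Longrightarrow> is_dist nA nM nB (P k)"
  by (rule is_dist_joint_dist[OF stratA stratB])

lemma stochastic_KA: "j \<in> {1..n} \<Longrightarrow> stochastic (nA*nM) (KA j)"
  by (rule stratA_classical(5)[OF stratA])

lemma stochastic_KB: "j \<in> {1..n} \<Longrightarrow> stochastic (nM*nB) (KB j)"
  by (rule stratB_classical(5)[OF stratB])

lemma mailbox_nonempty: "0 < nM"
  using is_dist_P[of 0] by (cases "nM = 0") (simp_all add: is_dist_def)

lemma meas_prob_A_bounds:
  assumes "a < nA"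
  shows "0 \<le> meas_prob \<sigma>A Out0 a" "0 \<le> meas_prob \<sigma>A Out1 a" "meas_prob \<sigma>A Out0 a + meas_prob \<sigma>A Out1 a \<le> 1"
  using stratA_classical(7)[OF stratA assms, where w = Out0] stratA_classical(7)[OF stratA assms, where w = Out1]
    stratA_classical(7)[OF stratA assms, where w = Abort] stratA_classical(8)[OF stratA assms]
  by linarith+

lemma meas_prob_B_bounds:
  assumes "b < nB"
  shows "0 \<le> meas_prob \<sigma>B Out0 b" "0 \<le> meas_prob \<sigma>B Out1 b" "meas_prob \<sigma>B Out0 b + meas_prob \<sigma>B Out1 b \<le> 1"
  using stratB_classical(7)[OF stratB assms, where w = Out0] stratB_classical(7)[OF stratB assms, where w = Out1]
    stratB_classical(7)[OF stratB assms, where w = Abort] stratB_classical(8)[OF stratB assms]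
  by linarith+

text \<open>Since the two agreeing outcomes already have total probability one, every reachable final
  configuration must produce the same outcome on both sides with certainty.\<close>

lemma final_agreement:
  assumes "a < nA" "m < nM" "b < nB" "0 < P n a m b"
  shows "(meas_prob \<sigma>A Out0 a = 1 \<and> meas_prob \<sigma>B Out0 b = 1) \<or> (meas_prob \<sigma>A Out1 a = 1 \<and> meas_prob \<sigma>B Out1 b = 1)"
proof -
  let ?g = "\<lambda>a m b. meas_prob \<sigma>A Out0 a * meas_prob \<sigma>B Out0 b + meas_prob \<sigma>A Out1 a * meas_prob \<sigma>B Out1 b"
  have "(\<Sum>a<nA. \<Sum>m<nM. \<Sum>b<nB. ?g a m b * P n a m b)
      = prob N (classical_alg nA) (classical_alg nM) (classical_alg nB) \<sigma>A \<sigma>B Out0 Out0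
      + prob N (classical_alg nA) (classical_alg nM) (classical_alg nB) \<sigma>A \<sigma>B Out1 Out1"
    unfolding prob_classical[OF stratA stratB] by (simp add: sum.distrib algebra_simps)
  also have "\<dots> = 1" using prob00 prob11 by simp
  finally have sum_one: "(\<Sum>a<nA. \<Sum>m<nM. \<Sum>b<nB. ?g a m b * P n a m b) = 1" .
  have "?g a' m' b' \<le> 1" if "a' < nA" "m' < nM" "b' < nB" for a' m' b'
    using meas_prob_A_bounds[OF that(1)] meas_prob_B_bounds[OF that(3)] by (intro agreement_le_one)
  then have "?g a m b = 1"
    using expectation_eq_oneD[where g = ?g, OF is_dist_P[OF order_refl] _ sum_one assms] by blast
  then show ?thesis
    using agreement_eq_one meas_prob_A_bounds[OF assms(1)] meas_prob_B_bounds[OF assms(3)] by blast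
qed

end

definition det_kernel :: "(nat \<Rightarrow> nat) \<Rightarrow> nat \<Rightarrow> nat \<Rightarrow> real" where
  "det_kernel g x y = (if y = g x then 1 else 0)"

definition det_strategy :: "nat \<Rightarrow> nat \<Rightarrow> nat \<Rightarrow> (nat \<Rightarrow> nat \<Rightarrow> nat) \<Rightarrow> nat \<Rightarrow> outcome \<Rightarrow> strategy" where
  "det_strategy init_dim c0 op_dim g meas_dim w0 =
     \<lparr>st_init = diag_mat init_dim (\<lambda>i. of_real (if i = c0 then 1 else 0)),
      st_ops = (\<lambda>j. kernel_op op_dim (det_kernel (g j))),
      st_meas = (\<lambda>w. diag_mat meas_dim (\<lambda>_. of_real (if w = w0 then 1 else 0)))\<rparr>"

lemma stochastic_det_kernel: "(\<And>x. x < D \<Longrightarrow> g x < D) \<Longrightarrow> stochastic D (det_kernel g)"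
  by (simp add: stochastic_def det_kernel_def)

lemma is_state_point:
  assumes "classical_factors fs" "c0 < adim fs"
  shows "is_state fs (diag_mat (adim fs) (\<lambda>i. of_real (if i = c0 then 1 else 0)))"
proof -
  have "mtrace (adim fs) (diag_mat (adim fs) (\<lambda>i. of_real (if i = c0 then 1 else 0)))
      = (\<Sum>i<adim fs. if i = c0 then 1 else 0)"
    unfolding mtrace_def by (intro sum.cong refl) (simp add: diag_mat_def)
  then show ?thesis
    using assms diag_mat_in_alg[OF assms(1)] psd_diag_mat[of "adim fs" "\<lambda>i. if i = c0 then 1 else 0"]
    by (simp add: is_state_def)
qed

lemma is_observable_constant:
  "is_observable [(1, D)] (\<lambda>w. diag_mat D (\<lambda>_. of_real (if w = w0 then 1 else 0)))"
  unfolding is_observable_def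
proof (intro conjI allI)
  show "in_alg [(1, D)] (diag_mat D (\<lambda>_. of_real (if w = w0 then 1 else 0)))"
    "psd (adim [(1, D)]) (diag_mat D (\<lambda>_. of_real (if w = w0 then 1 else 0)))" for w
    using diag_mat_in_alg[of "[(1, D)]"] psd_diag_mat[of D "\<lambda>_. if w = w0 then 1 else 0"] by simp_all
  show "(\<lambda>i j. diag_mat D (\<lambda>_. of_real (if Out0 = w0 then 1 else 0)) i j
        + diag_mat D (\<lambda>_. of_real (if Out1 = w0 then 1 else 0)) i j
        + diag_mat D (\<lambda>_. of_real (if Abort = w0 then 1 else 0)) i j) = eye (adim [(1, D)])"
    by (cases w0) (auto simp: diag_mat_def eye_def fun_eq_iff)
qed

lemma stratA_det_strategy:
  assumes "c0 < nR*nM" "\<And>j x. x < nR*nM \<Longrightarrow> g j x < nR*nM"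
  shows "stratA N (classical_alg nR) (classical_alg nM) (det_strategy (nR*nM) c0 (nR*nM) g nR w0)"
  using is_state_point[of "[(1,nR),(1,nM)]" c0] is_observable_constant[of nR w0]
    is_operation_kernel_op[of "[(1,nR),(1,nM)]"] stochastic_det_kernel assms
  by (simp add: stratA_def det_strategy_def classical_alg_def)

lemma stratB_det_strategy:
  assumes "c0 < nR" "\<And>j x. x < nM*nR \<Longrightarrow> g j x < nM*nR"
  shows "stratB N (classical_alg nR) (classical_alg nM) (det_strategy nR c0 (nM*nR) g nR w0)"
  using is_state_point[of "[(1,nR)]" c0] is_observable_constant[of nR w0]
    is_operation_kernel_op[of "[(1,nM),(1,nR)]"] stochastic_det_kernel assms
  by (simp add: stratB_def det_strategy_def classical_alg_def)

lemma init_prob_det_strategy: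
  "i < init_dim \<Longrightarrow> init_prob (det_strategy init_dim c0 op_dim g meas_dim w0) i = (if i = c0 then 1 else 0)"
  by (simp add: init_prob_def det_strategy_def diag_mat_def)

lemma meas_prob_det_strategy:
  "i < meas_dim \<Longrightarrow> meas_prob (det_strategy init_dim c0 op_dim g meas_dim w0) w0 i = 1"
  by (simp add: meas_prob_def det_strategy_def diag_mat_def)

lemma transition_det_strategy:
  "x < op_dim \<Longrightarrow> y < op_dim
    \<Longrightarrow> transition (st_ops (det_strategy init_dim c0 op_dim g meas_dim w0) j) x y = det_kernel (g j) x y"
  by (simp add: det_strategy_def transition_kernel_op)

definition code_bound :: "'a::countable set \<Rightarrow> nat" where
  "code_bound S = Suc (Max (to_nat ` S))"

lemma to_nat_less_code_bound: "finite S \<Longrightarrow> x \<in> S \<Longrightarrow> to_nat x < code_bound S"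
  by (simp add: code_bound_def le_imp_less_Suc)

section \<open>The game on Bob's possible states\<close>

context fair_classical_protocol
begin

text \<open>Sets of possible states of honest Bob are kept as lists, so that a cheater can store them in
  a classical register through their codes \<^const>\<open>to_nat\<close>.\<close>

definition bob_next :: "nat \<Rightarrow> nat list \<Rightarrow> nat \<Rightarrow> nat \<Rightarrow> nat list" where
  "bob_next j ys m m1 = filter (\<lambda>b'. \<exists>b\<in>set ys. 0 < KB j (m*nB + b) (m1*nB + b')) [0..<nB]"

definition bob_start :: "nat list" where
  "bob_start = filter (\<lambda>b. 0 < init_prob \<sigma>B b) [0..<nB]"

text \<open>\<open>alice_forces r ys m\<close>: with \<open>r\<close> rounds to go, honest Bob's state in \<open>ys\<close> and \<open>m\<close> in the
  mailbox, Alice can answer every message of Bob so that Bob surely outputs 0.  The round played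
  with \<open>Suc r\<close> rounds to go has index \<open>n - r\<close>.\<close>

fun alice_forces :: "nat \<Rightarrow> nat list \<Rightarrow> nat \<Rightarrow> bool" where
  "alice_forces 0 ys m \<longleftrightarrow> (\<forall>b\<in>set ys. meas_prob \<sigma>B Out0 b = 1)"
| "alice_forces (Suc r) ys m \<longleftrightarrow> (\<forall>m1<nM. \<exists>m2<nM. alice_forces r (bob_next (n - r) ys m m1) m2)"

lemma alice_forces_round:
  assumes "k < n"
  shows "alice_forces (n - k) ys m \<longleftrightarrow> (\<forall>m1<nM. \<exists>m2<nM. alice_forces (n - Suc k) (bob_next (Suc k) ys m m1) m2)"
proof -
  have "n - k = Suc (n - Suc k)" "n - (n - Suc k) = Suc k" using assms by auto
  then show ?thesis by simp
qed

lemma set_bob_next: "b' \<in> set (bob_next j ys m m1) \<longleftrightarrow> b' < nB \<and> (\<exists>b\<in>set ys. 0 < KB j (m*nB + b) (m1*nB + b'))"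
  by (auto simp: bob_next_def)

lemma joint_dist_Suc_pos:
  assumes k: "k < n" and a: "a < nA" "a' < nA" and m: "m < nM" "m1 < nM" "m2 < nM" and b: "b < nB" "b' < nB"
    and pos: "0 < P k a m b" "0 < KB (Suc k) (m*nB + b) (m1*nB + b')" "0 < KA (Suc k) (a*nM + m1) (a'*nM + m2)"
  shows "0 < P (Suc k) a' m2 b'"
proof -
  have j: "Suc k \<in> {1..n}" using k by simp
  have "0 < bob_update nM nB (KB (Suc k)) (P k) a m1 b'"
    using bob_update_pos_iff[OF stochastic_KB[OF j] is_dist_P] k a m b pos by auto
  then show ?thesis
    using alice_update_pos_iff[OF stochastic_KA[OF j] is_dist_bob_update[OF stochastic_KB[OF j] is_dist_P]]
      k a m b pos by auto
qed

lemma bob_next_pos: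
  assumes k: "k < n" and a: "a < nA" "a' < nA" and m: "m < nM" "m1 < nM" "m2 < nM"
    and ys: "\<forall>b\<in>set ys. b < nB \<and> 0 < P k a m b" and KA_pos: "0 < KA (Suc k) (a*nM + m1) (a'*nM + m2)"
  shows "\<forall>b'\<in>set (bob_next (Suc k) ys m m1). b' < nB \<and> 0 < P (Suc k) a' m2 b'"
proof
  fix b' assume "b' \<in> set (bob_next (Suc k) ys m m1)"
  then obtain b where b': "b' < nB" and b: "b \<in> set ys" and KB_pos: "0 < KB (Suc k) (m*nB + b) (m1*nB + b')"
    by (auto simp: set_bob_next)
  then have "b < nB" "0 < P k a m b" using ys by blast+
  then show "b' < nB \<and> 0 < P (Suc k) a' m2 b'"
    using joint_dist_Suc_pos[OF k a m _ b'] KB_pos KA_pos b' by blast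
qed

lemma alice_outputs_one:
  assumes "a < nA" "m < nM" "\<forall>b\<in>set ys. b < nB \<and> 0 < P n a m b" "\<not> alice_forces 0 ys m"
  shows "meas_prob \<sigma>A Out1 a = 1"
proof -
  obtain b where "b \<in> set ys" "meas_prob \<sigma>B Out0 b \<noteq> 1" using assms(4) by auto
  then show ?thesis using final_agreement assms by blast
qed

definition bob_supports :: "nat list set" where
  "bob_supports = {ys. set ys \<subseteq> {..<nB} \<and> length ys \<le> nB}"

lemma finite_bob_supports: "finite bob_supports"
  unfolding bob_supports_def by (rule finite_lists_length_le) simp

lemma filter_in_bob_supports: "filter Q [0..<nB] \<in> bob_supports"
  unfolding bob_supports_def by (auto intro: order_trans[OF length_filter_le])

end

section \<open>Alice cheats when she can force Bob's output\<close>

locale alice_can_force = fair_classical_protocol +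
  fixes m0 :: nat
  assumes m0_less: "m0 < nM" and forces_start: "alice_forces n bob_start m0"
begin

definition alice_reply :: "nat \<Rightarrow> nat list \<Rightarrow> nat \<Rightarrow> nat \<Rightarrow> nat" where
  "alice_reply j ys m m1 = (if \<exists>m2<nM. alice_forces (n - j) (bob_next j ys m m1) m2
     then LEAST m2. m2 < nM \<and> alice_forces (n - j) (bob_next j ys m m1) m2 else 0)"

lemma alice_reply_less: "alice_reply j ys m m1 < nM"
  unfolding alice_reply_def using mailbox_nonempty
  by (auto intro: LeastI2_ex[where Q = "\<lambda>m2. m2 < nM"])

lemma alice_reply_forces:
  assumes "\<exists>m2<nM. alice_forces (n - j) (bob_next j ys m m1) m2"
  shows "alice_forces (n - j) (bob_next j ys m m1) (alice_reply j ys m m1)"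
proof -
  let ?R = "\<lambda>m2. m2 < nM \<and> alice_forces (n - j) (bob_next j ys m m1) m2"
  have "?R (Least ?R)" using assms by (rule LeastI_ex)
  then show ?thesis using assms by (simp add: alice_reply_def)
qed

definition alice_reg :: nat where
  "alice_reg = code_bound (bob_supports \<times> {..<nM})"

text \<open>Alice's register holds the code of the pair (Bob's possible states, last mailbox value);
  she reads Bob's message \<open>m1\<close>, replies with a winning \<open>m2\<close> and records the new pair.\<close>

definition alice_cheat_map :: "nat \<Rightarrow> nat \<Rightarrow> nat" where
  "alice_cheat_map j x = (case from_nat (x div nM) of (ys, m) \<Rightarrow>
     to_nat (bob_next j ys m (x mod nM), alice_reply j ys m (x mod nM)) * nM + alice_reply j ys m (x mod nM))"

lemma alice_code_less: "m2 < nM \<Longrightarrow> to_nat (filter Q [0..<nB], m2) < alice_reg"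
  unfolding alice_reg_def
  by (rule to_nat_less_code_bound) (simp_all add: finite_bob_supports filter_in_bob_supports)

lemma alice_cheat_map_less: "alice_cheat_map j x < alice_reg * nM"
  using alice_code_less[OF alice_reply_less] alice_reply_less pair_index_less
  by (simp add: alice_cheat_map_def bob_next_def split: prod.split)

lemma alice_cheat_map_eq:
  assumes "m1 < nM" "from_nat r = (ys, m)"
  shows "alice_cheat_map j (r*nM + m1)
       = to_nat (bob_next j ys m m1, alice_reply j ys m m1) * nM + alice_reply j ys m m1"
  using assms by (simp add: alice_cheat_map_def pair_index_div_mod)

definition alice_cheat :: strategy where
  "alice_cheat = det_strategy (alice_reg*nM) (to_nat (bob_start, m0) * nM + m0) (alice_reg*nM)
     alice_cheat_map alice_reg Out0"

lemma stratA_alice_cheat: "stratA N (classical_alg alice_reg) (classical_alg nM) alice_cheat"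
  unfolding alice_cheat_def
  using alice_code_less[OF m0_less] m0_less alice_cheat_map_less pair_index_less
  by (intro stratA_det_strategy) (simp_all add: bob_start_def)

abbreviation "Q k \<equiv> joint_dist alice_reg nM nB alice_cheat \<sigma>B k"

lemma alice_cheat_start:
  assumes "r < alice_reg" "m < nM" "b < nB" "0 < Q 0 r m b"
  shows "\<exists>ys. from_nat r = (ys, m) \<and> b \<in> set ys \<and> alice_forces n ys m"
proof -
  have rm: "r*nM + m < alice_reg*nM" using assms(1,2) by (rule pair_index_less)
  have "0 < init_prob alice_cheat (r*nM + m) * init_prob \<sigma>B b" using assms(4) by simp
  moreover have "0 \<le> init_prob \<sigma>B b" using stratB_classical(2)[OF stratB assms(3)] .
  ultimately have "r*nM + m = to_nat (bob_start, m0) * nM + m0" "0 < init_prob \<sigma>B b"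
    using init_prob_det_strategy[OF rm] unfolding alice_cheat_def
    by (auto simp: zero_less_mult_iff split: if_splits)
  then show ?thesis
    using pair_index_eq_iff[OF assms(2) m0_less] forces_start assms(3) by (auto simp: bob_start_def)
qed

lemma alice_cheat_step:
  assumes k: "k < n"
    and IH: "\<And>r m b. r < alice_reg \<Longrightarrow> m < nM \<Longrightarrow> b < nB \<Longrightarrow> 0 < Q k r m b \<Longrightarrow>
      \<exists>ys. from_nat r = (ys, m) \<and> b \<in> set ys \<and> alice_forces (n - k) ys m"
    and bounds: "r' < alice_reg" "m2 < nM" "b' < nB" and pos: "0 < Q (Suc k) r' m2 b'"
  shows "\<exists>ys. from_nat r' = (ys, m2) \<and> b' \<in> set ys \<and> alice_forces (n - Suc k) ys m2"
proof -
  let ?KC = "transition (st_ops alice_cheat (Suc k))"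
  have j: "Suc k \<in> {1..n}" using k by simp
  have KC: "stochastic (alice_reg*nM) ?KC" by (rule stratA_classical(5)[OF stratA_alice_cheat j])
  have Qk: "is_dist alice_reg nM nB (Q k)" using is_dist_joint_dist[OF stratA_alice_cheat stratB] k by simp
  obtain r m1 where r: "r < alice_reg" and m1: "m1 < nM"
    and bob_moved: "0 < bob_update nM nB (KB (Suc k)) (Q k) r m1 b'"
    and alice_moved: "0 < ?KC (r*nM + m1) (r'*nM + m2)"
    using pos alice_update_pos_iff[OF KC is_dist_bob_update[OF stochastic_KB[OF j] Qk] bounds] by auto
  obtain m b where m: "m < nM" and b: "b < nB" and "0 < Q k r m b"
    and KB_pos: "0 < KB (Suc k) (m*nB + b) (m1*nB + b')"
    using bob_moved bob_update_pos_iff[OF stochastic_KB[OF j] Qk r m1 bounds(3)] by blast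
  then obtain ys where ys: "from_nat r = (ys, m)" "b \<in> set ys" "alice_forces (n - k) ys m"
    using IH r by blast
  have b'_next: "b' \<in> set (bob_next (Suc k) ys m m1)"
    using ys(2) KB_pos bounds(3) by (auto simp: set_bob_next)
  have "\<exists>m2<nM. alice_forces (n - Suc k) (bob_next (Suc k) ys m m1) m2"
    using ys(3) alice_forces_round[OF k] m1 by blast
  then have wins: "alice_forces (n - Suc k) (bob_next (Suc k) ys m m1) (alice_reply (Suc k) ys m m1)"
    by (rule alice_reply_forces[of "Suc k", simplified])
  have "r'*nM + m2 = alice_cheat_map (Suc k) (r*nM + m1)"
    using alice_moved transition_det_strategy pair_index_less[OF r m1] pair_index_less[OF bounds(1,2)]
    by (auto simp: alice_cheat_def det_kernel_def split: if_splits)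
  also have "\<dots> = to_nat (bob_next (Suc k) ys m m1, alice_reply (Suc k) ys m m1) * nM + alice_reply (Suc k) ys m m1"
    by (rule alice_cheat_map_eq[OF m1 ys(1)])
  finally have "r' = to_nat (bob_next (Suc k) ys m m1, alice_reply (Suc k) ys m m1)"
    "m2 = alice_reply (Suc k) ys m m1"
    using pair_index_eq_iff[OF bounds(2) alice_reply_less] by blast+
  then show ?thesis using b'_next wins by auto
qed

lemma alice_cheat_invariant:
  "k \<le> n \<Longrightarrow> r < alice_reg \<Longrightarrow> m < nM \<Longrightarrow> b < nB \<Longrightarrow> 0 < Q k r m b \<Longrightarrow>
    \<exists>ys. from_nat r = (ys, m) \<and> b \<in> set ys \<and> alice_forces (n - k) ys m"
proof (induction k arbitrary: r m b)
  case 0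
  then show ?case using alice_cheat_start by simp
next
  case (Suc k)
  then have "k < n" by simp
  with Suc.IH have "r' < alice_reg \<Longrightarrow> m' < nM \<Longrightarrow> b' < nB \<Longrightarrow> 0 < Q k r' m' b' \<Longrightarrow>
      \<exists>ys. from_nat r' = (ys, m') \<and> b' \<in> set ys \<and> alice_forces (n - k) ys m'"
    for r' m' b' by simp
  then show ?case by (rule alice_cheat_step[OF \<open>k < n\<close> _ Suc.prems(2-5)])
qed

lemma alice_cheat_wins:
  "prob N (classical_alg alice_reg) (classical_alg nM) (classical_alg nB) alice_cheat \<sigma>B Out0 Out0 = 1"
  unfolding prob_classical[OF stratA_alice_cheat stratB]
proof (rule expectation_eq_one[OF is_dist_joint_dist[OF stratA_alice_cheat stratB order_refl]])
  fix r m b assume "r < alice_reg" "m < nM" "b < nB" "0 < Q n r m b"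
  then have "meas_prob \<sigma>B Out0 b = 1" using alice_cheat_invariant[of n r m b] by auto
  moreover have "meas_prob alice_cheat Out0 r = 1"
    using \<open>r < alice_reg\<close> by (simp add: alice_cheat_def meas_prob_det_strategy)
  ultimately show "meas_prob alice_cheat Out0 r * meas_prob \<sigma>B Out0 b = 1" by simp
qed

end

section \<open>Bob cheats when Alice cannot force his output\<close>

locale alice_cannot_force = fair_classical_protocol +
  assumes cannot_force: "\<And>m0. m0 < nM \<Longrightarrow> \<not> alice_forces n bob_start m0"
begin

definition bob_reply :: "nat \<Rightarrow> nat list \<Rightarrow> nat \<Rightarrow> nat" where
  "bob_reply j ys m = (if \<exists>m1<nM. \<forall>m2<nM. \<not> alice_forces (n - j) (bob_next j ys m m1) m2
     then LEAST m1. m1 < nM \<and> (\<forall>m2<nM. \<not> alice_forces (n - j) (bob_next j ys m m1) m2) else 0)"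

lemma bob_reply_less: "bob_reply j ys m < nM"
  unfolding bob_reply_def using mailbox_nonempty
  by (auto intro: LeastI2_ex[where Q = "\<lambda>m1. m1 < nM"])

lemma bob_reply_resists:
  assumes "\<exists>m1<nM. \<forall>m2<nM. \<not> alice_forces (n - j) (bob_next j ys m m1) m2" "m2 < nM"
  shows "\<not> alice_forces (n - j) (bob_next j ys m (bob_reply j ys m)) m2"
proof -
  let ?R = "\<lambda>m1. m1 < nM \<and> (\<forall>m2<nM. \<not> alice_forces (n - j) (bob_next j ys m m1) m2)"
  have "?R (Least ?R)" using assms(1) by (rule LeastI_ex)
  then show ?thesis using assms by (simp add: bob_reply_def)
qed

definition bob_reg :: nat where
  "bob_reg = code_bound bob_supports"

text \<open>Bob's register holds the code of the list of honest Bob's possible states; reading Alice's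
  message \<open>m\<close>, he sends a message from which Alice cannot force his output and records the new list.\<close>

definition bob_cheat_map :: "nat \<Rightarrow> nat \<Rightarrow> nat" where
  "bob_cheat_map j x = bob_reply j (from_nat (x mod bob_reg)) (x div bob_reg) * bob_reg
     + to_nat (bob_next j (from_nat (x mod bob_reg)) (x div bob_reg) (bob_reply j (from_nat (x mod bob_reg)) (x div bob_reg)))"

lemma bob_code_less: "to_nat (filter Q [0..<nB]) < bob_reg"
  unfolding bob_reg_def by (rule to_nat_less_code_bound[OF finite_bob_supports filter_in_bob_supports])

lemma bob_next_code_less: "to_nat (bob_next j ys m m1) < bob_reg"
  unfolding bob_next_def by (rule bob_code_less)

lemma bob_cheat_map_less: "bob_cheat_map j x < nM * bob_reg"
  using bob_code_less bob_reply_less pair_index_less by (simp add: bob_cheat_map_def bob_next_def)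

lemma bob_cheat_map_eq:
  assumes "r < bob_reg" "from_nat r = ys"
  shows "bob_cheat_map j (m*bob_reg + r) = bob_reply j ys m * bob_reg + to_nat (bob_next j ys m (bob_reply j ys m))"
  using assms by (simp add: bob_cheat_map_def pair_index_div_mod)

definition bob_cheat :: strategy where
  "bob_cheat = det_strategy bob_reg (to_nat bob_start) (nM*bob_reg) bob_cheat_map bob_reg Out1"

lemma stratB_bob_cheat: "stratB N (classical_alg bob_reg) (classical_alg nM) bob_cheat"
  unfolding bob_cheat_def
  using bob_code_less bob_cheat_map_less by (intro stratB_det_strategy) (simp_all add: bob_start_def)

abbreviation "Q k \<equiv> joint_dist nA nM bob_reg \<sigma>A bob_cheat k"

lemma bob_cheat_start:
  assumes "a < nA" "m < nM" "r < bob_reg" "0 < Q 0 a m r"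
  shows "(\<forall>b\<in>set (from_nat r). b < nB \<and> 0 < P 0 a m b) \<and> \<not> alice_forces n (from_nat r) m"
proof -
  have am: "a*nM + m < nA*nM" using assms(1,2) by (rule pair_index_less)
  have "0 < init_prob \<sigma>A (a*nM + m) * init_prob bob_cheat r" using assms(4) by simp
  moreover have "0 \<le> init_prob \<sigma>A (a*nM + m)" using stratA_classical(2)[OF stratA am] .
  ultimately have "r = to_nat bob_start" "0 < init_prob \<sigma>A (a*nM + m)"
    using init_prob_det_strategy[OF assms(3)] unfolding bob_cheat_def
    by (auto simp: zero_less_mult_iff split: if_splits)
  then have "from_nat r = bob_start" "\<forall>b\<in>set bob_start. b < nB \<and> 0 < P 0 a m b"
    by (auto simp: bob_start_def)
  then show ?thesis using cannot_force[OF assms(2)] by simp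
qed

lemma bob_cheat_step:
  assumes k: "k < n"
    and IH: "\<And>a m r. a < nA \<Longrightarrow> m < nM \<Longrightarrow> r < bob_reg \<Longrightarrow> 0 < Q k a m r \<Longrightarrow>
      (\<forall>b\<in>set (from_nat r). b < nB \<and> 0 < P k a m b) \<and> \<not> alice_forces (n - k) (from_nat r) m"
    and bounds: "a' < nA" "m2 < nM" "r' < bob_reg" and pos: "0 < Q (Suc k) a' m2 r'"
  shows "(\<forall>b'\<in>set (from_nat r'). b' < nB \<and> 0 < P (Suc k) a' m2 b') \<and> \<not> alice_forces (n - Suc k) (from_nat r') m2"
proof -
  let ?KD = "transition (st_ops bob_cheat (Suc k))"
  have j: "Suc k \<in> {1..n}" using k by simp
  have KD: "stochastic (nM*bob_reg) ?KD" by (rule stratB_classical(5)[OF stratB_bob_cheat j])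
  have Qk: "is_dist nA nM bob_reg (Q k)" using is_dist_joint_dist[OF stratA stratB_bob_cheat] k by simp
  obtain a m1 where a: "a < nA" and m1: "m1 < nM"
    and bob_moved: "0 < bob_update nM bob_reg ?KD (Q k) a m1 r'"
    and alice_moved: "0 < KA (Suc k) (a*nM + m1) (a'*nM + m2)"
    using pos alice_update_pos_iff[OF stochastic_KA[OF j] is_dist_bob_update[OF KD Qk] bounds] by auto
  obtain m r where m: "m < nM" and r: "r < bob_reg" and "0 < Q k a m r"
    and KD_pos: "0 < ?KD (m*bob_reg + r) (m1*bob_reg + r')"
    using bob_moved bob_update_pos_iff[OF KD Qk a m1 bounds(3)] by blast
  then have inv: "\<forall>b\<in>set (from_nat r). b < nB \<and> 0 < P k a m b" "\<not> alice_forces (n - k) (from_nat r) m"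
    using IH a by blast+
  let ?ys = "from_nat r :: nat list"
  have resist: "\<exists>m1<nM. \<forall>m2<nM. \<not> alice_forces (n - Suc k) (bob_next (Suc k) ?ys m m1) m2"
    using inv(2) alice_forces_round[OF k] by blast
  have "m1*bob_reg + r' = bob_cheat_map (Suc k) (m*bob_reg + r)"
    using KD_pos transition_det_strategy pair_index_less[OF m r] pair_index_less[OF m1 bounds(3)]
    by (auto simp: bob_cheat_def det_kernel_def split: if_splits)
  also have "\<dots> = bob_reply (Suc k) ?ys m * bob_reg + to_nat (bob_next (Suc k) ?ys m (bob_reply (Suc k) ?ys m))"
    by (rule bob_cheat_map_eq[OF r refl])
  finally have m1_eq: "m1 = bob_reply (Suc k) ?ys m" and r'_eq: "from_nat r' = bob_next (Suc k) ?ys m m1"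
    using pair_index_eq_iff[OF bounds(3) bob_next_code_less] by auto
  have "\<forall>b'\<in>set (from_nat r'). b' < nB \<and> 0 < P (Suc k) a' m2 b'"
    unfolding r'_eq by (rule bob_next_pos[OF k a bounds(1) m m1 bounds(2) inv(1) alice_moved])
  moreover have "\<not> alice_forces (n - Suc k) (from_nat r') m2"
    using bob_reply_resists[OF resist bounds(2)] unfolding r'_eq m1_eq by simp
  ultimately show ?thesis by blast
qed

lemma bob_cheat_invariant:
  "k \<le> n \<Longrightarrow> a < nA \<Longrightarrow> m < nM \<Longrightarrow> r < bob_reg \<Longrightarrow> 0 < Q k a m r \<Longrightarrow>
    (\<forall>b\<in>set (from_nat r). b < nB \<and> 0 < P k a m b) \<and> \<not> alice_forces (n - k) (from_nat r) m"
proof (induction k arbitrary: a m r)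
  case 0
  then show ?case using bob_cheat_start by simp
next
  case (Suc k)
  then have "k < n" by simp
  with Suc.IH have "a' < nA \<Longrightarrow> m' < nM \<Longrightarrow> r' < bob_reg \<Longrightarrow> 0 < Q k a' m' r' \<Longrightarrow>
      (\<forall>b\<in>set (from_nat r'). b < nB \<and> 0 < P k a' m' b) \<and> \<not> alice_forces (n - k) (from_nat r') m'"
    for a' m' r' by simp
  then show ?case by (rule bob_cheat_step[OF \<open>k < n\<close> _ Suc.prems(2-5)])
qed

lemma bob_cheat_wins:
  "prob N (classical_alg nA) (classical_alg nM) (classical_alg bob_reg) \<sigma>A bob_cheat Out1 Out1 = 1"
  unfolding prob_classical[OF stratA stratB_bob_cheat]
proof (rule expectation_eq_one[OF is_dist_joint_dist[OF stratA stratB_bob_cheat order_refl]])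
  fix a m r assume "a < nA" "m < nM" "r < bob_reg" "0 < Q n a m r"
  then have "(\<forall>b\<in>set (from_nat r). b < nB \<and> 0 < P n a m b) \<and> \<not> alice_forces (n - n) (from_nat r) m"
    by (intro bob_cheat_invariant) simp_all
  then have "meas_prob \<sigma>A Out1 a = 1"
    using alice_outputs_one \<open>a < nA\<close> \<open>m < nM\<close> unfolding diff_self_eq_0 by blast
  moreover have "meas_prob bob_cheat Out1 r = 1"
    using \<open>r < bob_reg\<close> by (simp add: bob_cheat_def meas_prob_det_strategy)
  ultimately show "meas_prob \<sigma>A Out1 a * meas_prob bob_cheat Out1 r = 1" by simp
qed

end

lemma (in fair_classical_protocol) some_cheater_wins:
  "(\<exists>nR \<sigma>'. obs_alg (classical_alg nR) \<and> stratA N (classical_alg nR) (classical_alg nM) \<sigma>' \<and>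
      prob N (classical_alg nR) (classical_alg nM) (classical_alg nB) \<sigma>' \<sigma>B Out0 Out0 = 1)
   \<or> (\<exists>nR \<sigma>'. obs_alg (classical_alg nR) \<and> stratB N (classical_alg nR) (classical_alg nM) \<sigma>' \<and>
      prob N (classical_alg nA) (classical_alg nM) (classical_alg nR) \<sigma>A \<sigma>' Out1 Out1 = 1)"
proof (cases "\<exists>m0<nM. alice_forces n bob_start m0")
  case True
  then obtain m0 where "m0 < nM" "alice_forces n bob_start m0" by blast
  then interpret alice_can_force N nA nM nB \<sigma>A \<sigma>B m0 by unfold_locales
  have "obs_alg (classical_alg alice_reg)"
    by (simp add: obs_alg_def classical_alg_def alice_reg_def code_bound_def)
  then show ?thesis using stratA_alice_cheat alice_cheat_wins by blast
next
  case False
  then interpret alice_cannot_force N nA nM nB \<sigma>A \<sigma>B by unfold_locales blast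
  have "obs_alg (classical_alg bob_reg)"
    by (simp add: obs_alg_def classical_alg_def bob_reg_def code_bound_def)
  then show ?thesis using stratB_bob_cheat bob_cheat_wins by blast
qed

lemma weak_coin_tossing_classical_impossible:
  assumes "\<epsilon> < 1/2"
  shows "\<not> weak_coin_tossing N (classical_alg nA) (classical_alg nM) (classical_alg nB) \<epsilon> \<sigma>A \<sigma>B"
proof
  assume weak: "weak_coin_tossing N (classical_alg nA) (classical_alg nM) (classical_alg nB) \<epsilon> \<sigma>A \<sigma>B"
  then interpret fair_classical_protocol N nA nM nB \<sigma>A \<sigma>B
    by unfold_locales (simp_all add: weak_coin_tossing_def)
  from some_cheater_wins show False
    using weak assms unfolding weak_coin_tossing_def by fastforce
qed

lemma strong_imp_weak_coin_tossing:
  "strong_coin_tossing N a m b \<epsilon> \<sigma>A \<sigma>B \<Longrightarrow> weak_coin_tossing N a m b \<epsilon> \<sigma>A \<sigma>B"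
  unfolding strong_coin_tossing_def weak_coin_tossing_def by blast

theorem mainTheorem1:
  fixes N nA nB nM :: nat and \<epsilon> :: real
  assumes "even N" and "\<epsilon> < 1/2"
  shows "\<not> (\<exists>\<sigma>A \<sigma>B. weak_coin_tossing N (classical_alg nA) (classical_alg nM) (classical_alg nB) \<epsilon> \<sigma>A \<sigma>B)
       \<and> \<not> (\<exists>\<sigma>A \<sigma>B. strong_coin_tossing N (classical_alg nA) (classical_alg nM) (classical_alg nB) \<epsilon> \<sigma>A \<sigma>B)"
proof -
  show ?thesis
    using weak_coin_tossing_classical_impossible[OF assms(2)] strong_imp_weak_coin_tossing by blast
qed

end
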